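(* Let $\mathcal T=\{(x,y):0\le y\le x\le1\}$ and let $B_g,B_{g'},B_f,B_{f_x}>0$ be arbitrary. Consider $$u_t(x,t)=u_x(x,t)+g(x)u(0,t)+\int_0^xf(x,y)u(y,t)\,dy,\quad x\in[0,1),\qquad u(1,t)=U(t),$$ with any $g\in C^1([0,1])$ and $f\in C^1(\mathcal T)$ whose derivatives are Lipschitz and which satisfy $\|g\|_\infty\le B_g$, $\|g'\|_\infty\le B_{g'}$, $\|f\|_\infty\le B_f$, $\|f_x\|_\infty\le B_{f_x}$. There exists a sufficiently small $\epsilon^*(B_g,B_{g'},B_f,B_{f_x})>0$ such that, if $\hat k=\hat{\mathcal Q}(g,f)$ is a neural operator gain kernel with $|k-\hat k|+|k_x-\hat k_x|+|k_y-\hat k_y|<\epsilon$ on $\mathcal T$ for some $\epsilon\in(0,\epsilon^* )$, where $k=\mathcal Q(g,f)$ is the exact backstepping kernel, then the feedback $U(t)=\int_0^1\hat k(1,y)u(y,t)\,dy$ ensures that there exist $M,c^*>0$ such that closed-loop solutions satisfy $$\|u(t)\|\le Me^{-c^*t/2}\|u(0)\|\quad\forall t\ge0.$$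
   Context: The exact backstepping kernel $k=\mathcal Q(g,f)$ is the solution on $\mathcal T$ of $k(x,y)=-g(x-y)-\int_0^y f(x-y+\xi,\xi)d\xi+\int_0^{x-y}g(\xi)k(x-y,\xi)d\xi+\int_0^y\int_0^{x-y}f(\xi+\eta,\eta)k(x-y+\eta,\xi+\eta)d\xi d\eta$. A neural operator $\hat{\mathcal Q}$ is a DeepONet-type map $(g,f)\mapsto\sum_{k=1}^p g^{\mathcal N}(\mathbf s;\vartheta^{(k)})f^{\mathcal N}((x,y);\theta^{(k)})$ built from neural networks evaluated on point samples $\mathbf s$ of $(g,f)$. $\|\cdot\|_\infty$ is the supremum norm and $\|u(t)\|$ is the $L^2[0,1]$ norm of $u(\cdot,t)$. *)

theory Defs
  imports "HOL-Analysis.Analysis"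
begin

definition Tri :: "(real \<times> real) set" where
  "Tri = {(x, y). 0 \<le> y \<and> y \<le> x \<and> x \<le> 1}"

definition admissible_g :: "real \<Rightarrow> real \<Rightarrow> (real \<Rightarrow> real) \<Rightarrow> (real \<Rightarrow> real) \<Rightarrow> bool" where
  "admissible_g Bg Bg' g g' \<longleftrightarrow>
     (\<forall>x\<in>{0..1}. (g has_real_derivative g' x) (at x within {0..1})) \<and>
     continuous_on {0..1} g' \<and>
     (\<exists>L. L-lipschitz_on {0..1} g') \<and>
     (\<forall>x\<in>{0..1}. \<bar>g x\<bar> \<le> Bg) \<and>
     (\<forall>x\<in>{0..1}. \<bar>g' x\<bar> \<le> Bg')"

definition C1_on_Tri :: "(real \<times> real \<Rightarrow> real) \<Rightarrow> (real \<times> real \<Rightarrow> real) \<Rightarrow> (real \<times> real \<Rightarrow> real) \<Rightarrow> bool" where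
  "C1_on_Tri h hx hy \<longleftrightarrow>
     (\<forall>p\<in>Tri. (h has_derivative (\<lambda>(a, b). hx p * a + hy p * b)) (at p within Tri)) \<and>
     continuous_on Tri hx \<and> continuous_on Tri hy"

definition admissible_f :: "real \<Rightarrow> real \<Rightarrow> (real \<times> real \<Rightarrow> real) \<Rightarrow> (real \<times> real \<Rightarrow> real) \<Rightarrow> (real \<times> real \<Rightarrow> real) \<Rightarrow> bool" where
  "admissible_f Bf Bfx f fx fy \<longleftrightarrow>
     C1_on_Tri f fx fy \<and>
     (\<exists>L. L-lipschitz_on Tri fx) \<and> (\<exists>L. L-lipschitz_on Tri fy) \<and>
     (\<forall>p\<in>Tri. \<bar>f p\<bar> \<le> Bf) \<and>
     (\<forall>p\<in>Tri. \<bar>fx p\<bar> \<le> Bfx)"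

definition kernel_equation :: "(real \<Rightarrow> real) \<Rightarrow> (real \<times> real \<Rightarrow> real) \<Rightarrow> (real \<times> real \<Rightarrow> real) \<Rightarrow> bool" where
  "kernel_equation g f k \<longleftrightarrow>
     (\<forall>(x, y)\<in>Tri.
        k (x, y) = - g (x - y)
                   - integral {0..y} (\<lambda>\<xi>. f (x - y + \<xi>, \<xi>))
                   + integral {0..x - y} (\<lambda>\<xi>. g \<xi> * k (x - y, \<xi>))
                   + integral {0..y} (\<lambda>\<eta>. integral {0..x - y}
                        (\<lambda>\<xi>. f (\<xi> + \<eta>, \<eta>) * k (x - y + \<eta>, \<xi> + \<eta>))))"

definition closed_loop_solution ::
  "(real \<Rightarrow> real) \<Rightarrow> (real \<times> real \<Rightarrow> real) \<Rightarrow> (real \<times> real \<Rightarrow> real) \<Rightarrow> (real \<Rightarrow> real \<Rightarrow> real) \<Rightarrow> bool" where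
  "closed_loop_solution g f khat u \<longleftrightarrow>
     (\<exists>ux ut.
        continuous_on ({0..1} \<times> {0..}) ux \<and> continuous_on ({0..1} \<times> {0..}) ut \<and>
        (\<forall>p\<in>{0..1} \<times> {0..}.
           ((\<lambda>(x, t). u x t) has_derivative (\<lambda>(a, b). ux p * a + ut p * b))
             (at p within {0..1} \<times> {0..})) \<and>
        (\<forall>x\<in>{0..<1}. \<forall>t\<ge>0.
           ut (x, t) = ux (x, t) + g x * u 0 t + integral {0..x} (\<lambda>y. f (x, y) * u y t))) \<and>
     (\<forall>t\<ge>0. u 1 t = integral {0..1} (\<lambda>y. khat (1, y) * u y t))"

definition L2norm :: "(real \<Rightarrow> real) \<Rightarrow> real" where
  "L2norm v = sqrt (integral {0..1} (\<lambda>x. (v x)\<^sup>2))"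

end

theory Submission
  imports Defs
begin

(* The backstepping transformation w = u - \<integral>\<^sub>0\<^sup>x k(x,y) u(y) dy built from the exact kernel k
   maps the plant onto the target system w_t = w_x; the kernel equation supplies exactly the
   boundary condition and the characteristic PDE needed for this, via integration by parts and
   Fubini on the triangle.  With the approximate kernel in the feedback, the only defect is the
   boundary value w(1,t) = \<integral>\<^sub>0\<^sup>1 (khat - k)(1,y) u(y,t) dy, of size at most \<epsilon> \<parallel>u(t)\<parallel>.
   A weighted sup-norm argument on the kernel equation bounds |k| by a constant K depending only
   on B_g and B_f, so the transformation and (by Gronwall) its inverse are bounded on L2 with
   constants depending only on K.  For V(t) = \<integral>\<^sub>0\<^sup>1 e^x w(x,t)^2 dx one gets
   V' = e w(1,t)^2 - w(0,t)^2 - V \<le> -V/2 once \<epsilon> is small in terms of K, and the decay of V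
   transfers back to u. *)

lemma mem_Tri_iff [simp]: "(a, b) \<in> Tri \<longleftrightarrow> 0 \<le> b \<and> b \<le> a \<and> a \<le> 1"
  by (simp add: Tri_def)

lemma compact_triangle: "compact {(y, z). 0 \<le> z \<and> z \<le> y \<and> y \<le> (a::real)}"
proof -
  have "{(y, z). 0 \<le> z \<and> z \<le> y \<and> y \<le> a} = cbox (0, 0) (a, a) \<inter> {p. snd p \<le> fst p}"
    by (auto simp: cbox_Pair_iff)
  moreover have "closed {p :: real \<times> real. snd p \<le> fst p}"
    by (intro closed_Collect_le continuous_intros)
  ultimately show ?thesis
    by (metis compact_Int_closed compact_cbox)
qed

lemma compact_Tri: "compact Tri"
  using compact_triangle[of 1] by (simp add: Tri_def)

lemma Tri_nonempty: "Tri \<noteq> {}"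
proof -
  have "(0, 0) \<in> Tri" by simp
  then show ?thesis by blast
qed

lemma rescale_mem_Tri: "x \<in> {0..1} \<Longrightarrow> s \<in> {0..1} \<Longrightarrow> (x, x * s) \<in> Tri"
  by (auto intro: mult_left_le mult_le_one)

lemma continuous_on_compose_Tri:
  assumes "continuous_on Tri F" "continuous_on S p" "\<And>s. s \<in> S \<Longrightarrow> p s \<in> Tri"
  shows "continuous_on S (\<lambda>s. F (p s))"
  by (rule continuous_on_compose2[OF assms(1,2)]) (use assms(3) in auto)

lemma continuous_on_Tri_slice:
  assumes "continuous_on Tri F" and "x \<le> 1"
  shows "continuous_on {0..x} (\<lambda>y. F (x, y))"
  by (rule continuous_on_compose_Tri[OF assms(1)]) (use assms(2) in \<open>auto intro!: continuous_intros\<close>)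

lemma C1_on_Tri_imp_continuous_on:
  assumes "C1_on_Tri F Fx Fy"
  shows "continuous_on Tri F"
  using assms unfolding C1_on_Tri_def
  by (meson continuous_on_eq_continuous_within has_derivative_continuous)

lemma C1_on_Tri_has_real_derivative_line:
  assumes C: "C1_on_Tri F Fx Fy" and s: "s \<in> S"
    and line: "\<And>s. s \<in> S \<Longrightarrow> (a1 + s * d1, a2 + s * d2) \<in> Tri"
  shows "((\<lambda>s. F (a1 + s * d1, a2 + s * d2)) has_real_derivative
     (Fx (a1 + s * d1, a2 + s * d2) * d1 + Fy (a1 + s * d1, a2 + s * d2) * d2)) (at s within S)"
proof -
  have D: "\<And>p. p \<in> Tri \<Longrightarrow> (F has_derivative (\<lambda>(a, b). Fx p * a + Fy p * b)) (at p within Tri)"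
    using C by (simp add: C1_on_Tri_def)
  have l: "((\<lambda>s. (a1 + s * d1, a2 + s * d2)) has_derivative (\<lambda>h. (h * d1, h * d2))) (at s within S)"
    by (auto intro!: derivative_eq_intros)
  have "((\<lambda>s. F (a1 + s * d1, a2 + s * d2)) has_derivative
      (\<lambda>h. (\<lambda>(a, b). Fx (a1 + s * d1, a2 + s * d2) * a + Fy (a1 + s * d1, a2 + s * d2) * b)
             (h * d1, h * d2))) (at s within S)"
    by (rule has_derivative_in_compose2[OF D _ s l]) (use line in auto)
  then show ?thesis
    unfolding has_field_derivative_def
    by (rule has_derivative_eq_rhs) (auto simp: algebra_simps)
qed

lemma C1_on_Tri_mult:
  assumes A: "C1_on_Tri a ax ay" and B: "C1_on_Tri b bx by'"
  shows "C1_on_Tri (\<lambda>p. a p * b p) (\<lambda>p. ax p * b p + a p * bx p) (\<lambda>p. ay p * b p + a p * by' p)"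
proof -
  have D: "((\<lambda>p. a p * b p) has_derivative
      (\<lambda>(h, k). (ax p * b p + a p * bx p) * h + (ay p * b p + a p * by' p) * k)) (at p within Tri)"
    if p: "p \<in> Tri" for p
  proof -
    have da: "(a has_derivative (\<lambda>(h, k). ax p * h + ay p * k)) (at p within Tri)"
      using A p by (simp add: C1_on_Tri_def)
    have db: "(b has_derivative (\<lambda>(h, k). bx p * h + by' p * k)) (at p within Tri)"
      using B p by (simp add: C1_on_Tri_def)
    show ?thesis
      by (rule has_derivative_eq_rhs[OF has_derivative_mult[OF da db]])
         (auto simp: algebra_simps fun_eq_iff)
  qed
  show ?thesis
    using A B C1_on_Tri_imp_continuous_on[OF A] C1_on_Tri_imp_continuous_on[OF B] D
    unfolding C1_on_Tri_def by (auto intro!: continuous_intros)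
qed

lemma C1_on_Tri_snd:
  assumes d: "\<And>y. y \<in> {0..1} \<Longrightarrow> (v has_real_derivative v' y) (at y within {0..1})"
    and c: "continuous_on {0..1} v'"
  shows "C1_on_Tri (\<lambda>p. v (snd p)) (\<lambda>p. 0) (\<lambda>p. v' (snd p))"
proof -
  have sub: "snd ` Tri \<subseteq> {0..1}" by (auto simp: Tri_def)
  have D: "((\<lambda>p. v (snd p)) has_derivative (\<lambda>(h, k). 0 * h + v' (snd p) * k)) (at p within Tri)"
    if p: "p \<in> Tri" for p
  proof -
    have d': "\<And>y. y \<in> {0..1} \<Longrightarrow> (v has_derivative (\<lambda>h. v' y * h)) (at y within {0..1})"
      using d by (simp add: has_field_derivative_def)
    have "((\<lambda>p. v (snd p)) has_derivative (\<lambda>y. v' (snd p) * snd y)) (at p within Tri)"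
      by (rule has_derivative_in_compose2[OF d' sub p has_derivative_snd[OF has_derivative_ident]])
    then show ?thesis by (rule has_derivative_eq_rhs) (auto simp: fun_eq_iff)
  qed
  have "continuous_on Tri (\<lambda>p. v' (snd p))"
    by (rule continuous_on_compose2[OF c]) (use sub in \<open>auto intro!: continuous_intros\<close>)
  then show ?thesis using D unfolding C1_on_Tri_def by (auto intro!: continuous_intros)
qed

lemma integral_rescale_unit_interval:
  fixes h :: "real \<Rightarrow> real"
  assumes "0 \<le> x"
  shows "integral {0..x} h = x * integral {0..1} (\<lambda>s. h (x * s))"
proof (cases "x = 0")
  case False
  with assms have x: "x > 0" by simp
  have "(\<lambda>s. s / x) ` {0..x} = {0..1}"
    using x by (auto simp: image_iff field_simps intro!: bexI[where x="_ * x"])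
  moreover have "integral ((\<lambda>s. s / x) ` {0..x}) (\<lambda>s. h (x * s)) = (1 / \<bar>x\<bar>) *\<^sub>R integral {0..x} h"
    by (rule integral_stretch_real) (use x in auto)
  ultimately show ?thesis using x by simp
qed simp

text \<open>No integrability of \<open>f\<close> is needed: a non-integrable \<open>f\<close> has integral \<open>0\<close>.\<close>

lemma abs_integral_le_integral:
  fixes f g :: "real \<Rightarrow> real"
  assumes g: "g integrable_on S" and le: "\<And>x. x \<in> S \<Longrightarrow> \<bar>f x\<bar> \<le> g x"
  shows "\<bar>integral S f\<bar> \<le> integral S g"
proof (cases "f integrable_on S")
  case True
  then show ?thesis using integral_norm_bound_integral[OF True g] le by auto
next
  case False
  then have "integral S f = 0" by (simp add: not_integrable_integral)
  moreover have "0 \<le> integral S g"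
    by (rule integral_nonneg[OF g]) (use le in force)
  ultimately show ?thesis by simp
qed

lemma has_integral_exp_linear:
  fixes c a :: real
  assumes "c \<noteq> 0" and "0 \<le> a"
  shows "((\<lambda>x. exp (c * x)) has_integral (exp (c * a) - 1) / c) {0..a}"
proof -
  have "((\<lambda>x. exp (c * x)) has_integral (exp (c * a) / c - exp (c * 0) / c)) {0..a}"
    by (rule fundamental_theorem_of_calculus[OF assms(2)])
       (use assms(1) in \<open>auto intro!: derivative_eq_intros
          simp: has_real_derivative_iff_has_vector_derivative[symmetric]\<close>)
  then show ?thesis by (simp add: diff_divide_distrib)
qed

lemma integral_exp_neg_le:
  fixes l a :: real
  assumes "l > 0" and "0 \<le> a"
  shows "integral {0..a} (\<lambda>x. exp (- l * x)) \<le> 1 / l"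
proof -
  have "integral {0..a} (\<lambda>x. exp (- l * x)) = (exp (- l * a) - 1) / (- l)"
    by (rule integral_unique[OF has_integral_exp_linear]) (use assms in auto)
  also have "\<dots> = (1 - exp (- l * a)) / l"
    using assms by (simp add: field_simps)
  also have "\<dots> \<le> 1 / l"
    by (rule divide_right_mono) (use assms in auto)
  finally show ?thesis .
qed

lemma integral_exp_le:
  fixes l a :: real
  assumes "l > 0" and "0 \<le> a"
  shows "integral {0..a} (\<lambda>x. exp (l * x)) \<le> exp (l * a) / l"
proof -
  have "integral {0..a} (\<lambda>x. exp (l * x)) = (exp (l * a) - 1) / l"
    by (rule integral_unique[OF has_integral_exp_linear]) (use assms in auto)
  also have "\<dots> \<le> exp (l * a) / l"
    by (rule divide_right_mono) (use assms in auto)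
  finally show ?thesis .
qed

lemma abs_integral_le_exp_neg:
  fixes F :: "real \<Rightarrow> real"
  assumes l: "l > 0" and s: "0 \<le> s" and F: "\<And>\<xi>. \<xi> \<in> {0..s} \<Longrightarrow> \<bar>F \<xi>\<bar> \<le> C * exp (- l * \<xi>)"
  shows "\<bar>integral {0..s} F\<bar> \<le> C / l"
proof -
  have "\<bar>F 0\<bar> \<le> C" using F[of 0] s by simp
  then have C: "C \<ge> 0" using abs_ge_zero[of "F 0"] by linarith
  have "\<bar>integral {0..s} F\<bar> \<le> integral {0..s} (\<lambda>\<xi>. C * exp (- l * \<xi>))"
    by (rule abs_integral_le_integral) (use F in \<open>auto intro!: integrable_continuous_real continuous_intros\<close>)
  also have "\<dots> \<le> C * (1 / l)"
    using mult_left_mono[OF integral_exp_neg_le[OF l s] C] by simp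
  finally show ?thesis by simp
qed

lemma abs_integral_le_exp:
  fixes G :: "real \<Rightarrow> real"
  assumes l: "l > 0" and y: "0 \<le> y" and G: "\<And>\<eta>. \<eta> \<in> {0..y} \<Longrightarrow> \<bar>G \<eta>\<bar> \<le> C * exp (l * \<eta>)"
  shows "\<bar>integral {0..y} G\<bar> \<le> C * exp (l * y) / l"
proof -
  have "\<bar>G 0\<bar> \<le> C" using G[of 0] y by simp
  then have C: "C \<ge> 0" using abs_ge_zero[of "G 0"] by linarith
  have "\<bar>integral {0..y} G\<bar> \<le> integral {0..y} (\<lambda>\<eta>. C * exp (l * \<eta>))"
    by (rule abs_integral_le_integral) (use G in \<open>auto intro!: integrable_continuous_real continuous_intros\<close>)
  also have "\<dots> \<le> C * (exp (l * y) / l)"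
    using mult_left_mono[OF integral_exp_le[OF l y] C] by simp
  finally show ?thesis by simp
qed

lemma Cauchy_Schwarz_integral_abs:
  fixes h :: "real \<Rightarrow> real"
  assumes c: "continuous_on {0..a} h" and a: "0 \<le> a"
  shows "(integral {0..a} (\<lambda>y. \<bar>h y\<bar>))^2 \<le> a * integral {0..a} (\<lambda>y. (h y)^2)"
proof (cases "a = 0")
  case False
  with a have a0: "a > 0" by simp
  define m where "m = integral {0..a} (\<lambda>y. \<bar>h y\<bar>)"
  define H where "H = integral {0..a} (\<lambda>y. (h y)^2)"
  have ih: "(\<lambda>y. (h y)^2) integrable_on {0..a}"
    using c by (auto intro!: integrable_continuous_real continuous_intros)
  \<comment> \<open>AM-GM: \<open>2 a m |h y| \<le> a\<^sup>2 (h y)\<^sup>2 + m\<^sup>2\<close>, integrated over \<open>[0, a]\<close>\<close>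
  have pointwise: "\<bar>h y\<bar> * m \<le> (a * (h y)^2 + m^2 / a) / 2" for y
  proof -
    have "0 \<le> (a * \<bar>h y\<bar> - m)^2" by simp
    then have "2 * a * (\<bar>h y\<bar> * m) \<le> a * (a * (h y)^2) + m^2"
      by (simp add: power2_eq_square algebra_simps)
    then show ?thesis using a0 by (simp add: field_simps power2_eq_square)
  qed
  have "m * m = integral {0..a} (\<lambda>y. \<bar>h y\<bar> * m)" by (simp add: m_def)
  also have "\<dots> \<le> integral {0..a} (\<lambda>y. (a * (h y)^2 + m^2 / a) / 2)"
    by (rule integral_le) (use c ih pointwise in \<open>auto intro!: integrable_continuous_real continuous_intros\<close>)
  also have "\<dots> = (a * H + m^2) / 2"
  proof -
    have "integral {0..a} (\<lambda>y. a * (h y)^2 + m^2 / a)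
        = integral {0..a} (\<lambda>y. a * (h y)^2) + integral {0..a} (\<lambda>y. m^2 / a)"
      by (rule integral_add) (use integrable_on_cmult_left[OF ih, of a] in auto)
    then show ?thesis using a0 by (simp add: H_def)
  qed
  finally show ?thesis by (simp add: m_def H_def power2_eq_square field_simps)
qed simp

lemma has_real_derivative_nonpos_imp_nonincreasing:
  fixes f :: "real \<Rightarrow> real"
  assumes ab: "a \<le> b"
    and d: "\<And>x. x \<in> {a..b} \<Longrightarrow> (f has_real_derivative f' x) (at x within {a..b})"
    and nonpos: "\<And>x. x \<in> {a..b} \<Longrightarrow> f' x \<le> 0"
  shows "f b \<le> f a"
proof -
  have "(f has_derivative (\<lambda>h. h * f' x)) (at x within {a..b})" if "a \<le> x" "x \<le> b" for x
  proof -
    have "(f has_derivative (*) (f' x)) (at x within {a..b})"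
      using d[of x] that by (simp add: has_field_derivative_def)
    then show ?thesis by (rule has_derivative_eq_rhs) (simp add: fun_eq_iff)
  qed
  from mvt_very_simple[OF ab this]
  obtain \<xi> where "\<xi> \<in> {a..b}" and "f b - f a = (b - a) * f' \<xi>"
    by blast
  then show ?thesis using mult_nonneg_nonpos[of "b - a" "f' \<xi>"] ab nonpos[of \<xi>] by simp
qed


section \<open>Volterra integrals\<close>

lemma continuous_on_Tri_rescaled:
  assumes "continuous_on Tri F"
  shows "continuous_on ({0..1} \<times> {0..1}) (\<lambda>p. F (fst p, fst p * snd p))"
  by (rule continuous_on_compose_Tri[OF assms]) (auto intro!: continuous_intros simp: mult_left_le)

lemma has_integral_rescaled_x_derivative:
  assumes C: "C1_on_Tri F Fx Fy" and x: "x \<in> {0..1}"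
  shows "((\<lambda>s. F (x, x * s) + x * s * Fy (x, x * s) + x * Fx (x, x * s)) has_integral
           F (x, x) + integral {0..x} (\<lambda>y. Fx (x, y))) {0..1}"
proof -
  \<comment> \<open>the first two terms are the derivative of \<open>s F(x, x s)\<close>\<close>
  have "((\<lambda>s. F (x, x * s) + x * s * Fy (x, x * s)) has_integral (1 * F (x, x * 1) - 0 * F (x, x * 0))) {0..1}"
  proof (rule fundamental_theorem_of_calculus)
    fix s :: real assume s: "s \<in> {0..1}"
    have "((\<lambda>s. F (x + s * 0, 0 + s * x)) has_real_derivative
        (Fx (x + s * 0, 0 + s * x) * 0 + Fy (x + s * 0, 0 + s * x) * x)) (at s within {0..1})"
      by (rule C1_on_Tri_has_real_derivative_line[OF C s])
         (use x in \<open>auto intro: mult_left_le_one_le\<close>)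
    then have "((\<lambda>s. F (x, x * s)) has_real_derivative Fy (x, x * s) * x) (at s within {0..1})"
      by (simp add: mult.commute)
    then show "((\<lambda>s. s * F (x, x * s)) has_vector_derivative
        (F (x, x * s) + x * s * Fy (x, x * s))) (at s within {0..1})"
      unfolding has_real_derivative_iff_has_vector_derivative[symmetric]
      by (auto intro!: derivative_eq_intros simp: algebra_simps)
  qed simp
  then have radial: "((\<lambda>s. F (x, x * s) + x * s * Fy (x, x * s)) has_integral F (x, x)) {0..1}"
    by simp
  have "continuous_on Tri Fx" using C by (simp add: C1_on_Tri_def)
  then have "continuous_on {0..1} (\<lambda>s. Fx (x, x * s))"
    by (rule continuous_on_compose_Tri) (use rescale_mem_Tri x in \<open>auto intro!: continuous_intros\<close>)
  then have "((\<lambda>s. x * Fx (x, x * s)) has_integral x * integral {0..1} (\<lambda>s. Fx (x, x * s))) {0..1}"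
    by (intro has_integral_mult_right integrable_integral integrable_continuous_real)
  then have "((\<lambda>s. x * Fx (x, x * s)) has_integral integral {0..x} (\<lambda>y. Fx (x, y))) {0..1}"
    using integral_rescale_unit_interval[of x "\<lambda>y. Fx (x, y)"] x by simp
  from has_integral_add[OF radial this] show ?thesis by simp
qed

text \<open>Rescaling \<open>y = x s\<close> moves the variable domain of integration to the fixed interval \<open>[0, 1]\<close>,
  where Leibniz's rule applies.\<close>

lemma Volterra_integral_has_real_derivative:
  assumes C: "C1_on_Tri F Fx Fy" and x: "x \<in> {0..1}"
  shows "((\<lambda>x. integral {0..x} (\<lambda>y. F (x, y))) has_real_derivative
           (F (x, x) + integral {0..x} (\<lambda>y. Fx (x, y)))) (at x within {0..1})"
proof -
  have cF: "continuous_on Tri F" using C by (rule C1_on_Tri_imp_continuous_on)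
  have cFx: "continuous_on Tri Fx" and cFy: "continuous_on Tri Fy"
    using C by (auto simp: C1_on_Tri_def)
  define G where "G x s = x * F (x, x * s)" for x s :: real
  define Gx where "Gx x s = F (x, x * s) + x * s * Fy (x, x * s) + x * Fx (x, x * s)" for x s :: real
  have dG: "((\<lambda>x. G x s) has_real_derivative Gx x s) (at x within {0..1})"
    if "x \<in> {0..1}" "s \<in> {0..1}" for x s
  proof -
    have "((\<lambda>x. F (0 + x * 1, 0 + x * s)) has_real_derivative
        (Fx (0 + x * 1, 0 + x * s) * 1 + Fy (0 + x * 1, 0 + x * s) * s)) (at x within {0..1})"
      by (rule C1_on_Tri_has_real_derivative_line[OF C that(1)]) (use rescale_mem_Tri that in auto)
    then show ?thesis unfolding G_def Gx_def
      by (auto intro!: derivative_eq_intros simp: algebra_simps)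
  qed
  have cGx: "continuous_on ({0..1} \<times> cbox 0 1) (\<lambda>(x, s). Gx x s)"
    using continuous_on_Tri_rescaled[OF cF] continuous_on_Tri_rescaled[OF cFx]
      continuous_on_Tri_rescaled[OF cFy]
    unfolding Gx_def by (auto simp: split_beta intro!: continuous_intros)
  have "G x' integrable_on cbox 0 1" if "x' \<in> {0..1}" for x'
  proof -
    have "continuous_on {0..1} (\<lambda>s. F (x', x' * s))"
      by (rule continuous_on_compose_Tri[OF cF]) (use rescale_mem_Tri that in \<open>auto intro!: continuous_intros\<close>)
    then show ?thesis unfolding G_def by (auto intro!: integrable_continuous_real continuous_intros)
  qed
  from leibniz_rule_field_derivative[OF dG this cGx x]
  have L: "((\<lambda>x. integral (cbox 0 1) (G x)) has_real_derivative integral (cbox 0 1) (Gx x))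
      (at x within {0..1})" by auto
  have rescaled: "integral {0..x'} (\<lambda>y. F (x', y)) = integral (cbox 0 1) (G x')"
    if "x' \<in> {0..1}" for x'
    using integral_rescale_unit_interval[of x' "\<lambda>y. F (x', y)"] that by (simp add: G_def[abs_def])
  have "((\<lambda>x. integral {0..x} (\<lambda>y. F (x, y))) has_real_derivative integral (cbox 0 1) (Gx x))
      (at x within {0..1})"
    by (rule has_field_derivative_transform_within[OF L zero_less_one x]) (simp add: rescaled)
  moreover have "integral (cbox 0 1) (Gx x) = F (x, x) + integral {0..x} (\<lambda>y. Fx (x, y))"
    using has_integral_rescaled_x_derivative[OF C x] unfolding Gx_def cbox_interval
    by (simp add: integral_unique)
  ultimately show ?thesis by simp
qed

lemma continuous_on_Volterra_integral:
  assumes "C1_on_Tri F Fx Fy"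
  shows "continuous_on {0..1} (\<lambda>x. integral {0..x} (\<lambda>y. F (x, y)))"
  unfolding continuous_on_eq_continuous_within
  using DERIV_continuous[OF Volterra_integral_has_real_derivative[OF assms]] by blast

lemma lborel_integral_indicator_Icc:
  fixes h :: "real \<Rightarrow> real"
  assumes "continuous_on {c..d} h"
  shows "(\<integral>z. indicator {c..d} z * h z \<partial>lborel) = integral {c..d} h"
proof -
  have "set_integrable lborel {c..d} h"
    unfolding set_integrable_def using borel_integrable_compact[OF compact_Icc assms] by simp
  from set_borel_integral_eq_integral(2)[OF this] show ?thesis
    by (simp add: set_lebesgue_integral_def)
qed

lemma lborel_integral_triangle_slices:
  fixes H :: "real \<times> real \<Rightarrow> real" and a :: real
  defines "T \<equiv> {(y, z). 0 \<le> z \<and> z \<le> y \<and> y \<le> a}"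
  assumes cH: "continuous_on T H"
  shows "(\<integral>z. indicator T (y, z) * H (y, z) \<partial>lborel) = indicator {0..a} y * integral {0..y} (\<lambda>z. H (y, z))"
    and "(\<integral>y. indicator T (y, z) * H (y, z) \<partial>lborel) = indicator {0..a} z * integral {z..a} (\<lambda>y. H (y, z))"
proof -
  show "(\<integral>z. indicator T (y, z) * H (y, z) \<partial>lborel) = indicator {0..a} y * integral {0..y} (\<lambda>z. H (y, z))"
  proof (cases "y \<in> {0..a}")
    case True
    have "(\<lambda>z. indicator T (y, z) * H (y, z)) = (\<lambda>z. indicator {0..y} z * H (y, z))"
      using True by (auto simp: T_def fun_eq_iff split: split_indicator)
    moreover have "continuous_on {0..y} (\<lambda>z. H (y, z))"
      by (rule continuous_on_compose2[OF cH]) (use True in \<open>auto simp: T_def intro!: continuous_intros\<close>)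
    ultimately show ?thesis using True lborel_integral_indicator_Icc by simp
  qed (auto simp: T_def split: split_indicator)
  show "(\<integral>y. indicator T (y, z) * H (y, z) \<partial>lborel) = indicator {0..a} z * integral {z..a} (\<lambda>y. H (y, z))"
  proof (cases "z \<in> {0..a}")
    case True
    have "(\<lambda>y. indicator T (y, z) * H (y, z)) = (\<lambda>y. indicator {z..a} y * H (y, z))"
      using True by (auto simp: T_def fun_eq_iff split: split_indicator)
    moreover have "continuous_on {z..a} (\<lambda>y. H (y, z))"
      by (rule continuous_on_compose2[OF cH]) (use True in \<open>auto simp: T_def intro!: continuous_intros\<close>)
    ultimately show ?thesis using True lborel_integral_indicator_Icc by simp
  qed (auto simp: T_def split: split_indicator)
qed

lemma integral_triangle_swap:
  fixes H :: "real \<times> real \<Rightarrow> real"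
  assumes cH: "continuous_on {(y, z). 0 \<le> z \<and> z \<le> y \<and> y \<le> a} H"
  shows "integral {0..a} (\<lambda>y. integral {0..y} (\<lambda>z. H (y, z)))
       = integral {0..a} (\<lambda>z. integral {z..a} (\<lambda>y. H (y, z)))"
proof -
  define T where "T = {(y, z). 0 \<le> z \<and> z \<le> y \<and> y \<le> (a::real)}"
  define Hc where "Hc p = indicator T p * H p" for p
  note slices = lborel_integral_triangle_slices[OF cH, folded T_def Hc_def]
  have cT: "compact T" unfolding T_def by (rule compact_triangle)
  have cT': "compact (prod.swap ` T)" by (rule compact_continuous_image[OF _ cT]) (intro continuous_intros)
  have cH': "continuous_on (prod.swap ` T) (\<lambda>p. H (snd p, fst p))"
    by (rule continuous_on_compose2[OF cH[folded T_def]]) (auto intro!: continuous_intros)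
  have "integrable lborel Hc"
    unfolding Hc_def using borel_integrable_compact[OF cT cH[folded T_def]] by simp
  then have I1: "integrable (lborel \<Otimes>\<^sub>M lborel) Hc" by (simp add: lborel_prod)
  have "(\<lambda>p. Hc (snd p, fst p)) = (\<lambda>p. indicator (prod.swap ` T) p *\<^sub>R H (snd p, fst p))"
    by (auto simp: Hc_def fun_eq_iff split: split_indicator)
  then have "integrable lborel (\<lambda>p. Hc (snd p, fst p))"
    using borel_integrable_compact[OF cT' cH'] by simp
  then have I2: "integrable (lborel \<Otimes>\<^sub>M lborel) (\<lambda>p. Hc (snd p, fst p))" by (simp add: lborel_prod)
  have "integral {0..a} (\<lambda>y. integral {0..y} (\<lambda>z. H (y, z))) = (\<integral>y. (\<integral>z. Hc (y, z) \<partial>lborel) \<partial>lborel)"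
    using set_borel_integral_eq_integral(2)[of "{0..a}" "\<lambda>y. integral {0..y} (\<lambda>z. H (y, z))"]
      lborel_pair.integrable_fst'[OF I1]
    by (simp add: slices set_integrable_def set_lebesgue_integral_def)
  also have "\<dots> = (\<integral>z. (\<integral>y. Hc (y, z) \<partial>lborel) \<partial>lborel)"
    using lborel_pair.Fubini_integral[of "\<lambda>y z. Hc (y, z)"] I1 by simp
  also have "\<dots> = integral {0..a} (\<lambda>z. integral {z..a} (\<lambda>y. H (y, z)))"
    using set_borel_integral_eq_integral(2)[of "{0..a}" "\<lambda>z. integral {z..a} (\<lambda>y. H (y, z))"]
      lborel_pair.integrable_fst'[OF I2]
    by (simp add: slices set_integrable_def set_lebesgue_integral_def)
  finally show ?thesis .
qed


lemma integral_Gronwall: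
  fixes \<phi> \<psi> :: "real \<Rightarrow> real"
  assumes c\<phi>: "continuous_on {0..1} \<phi>" and c\<psi>: "continuous_on {0..1} \<psi>"
    and \<psi>: "\<And>x. x \<in> {0..1} \<Longrightarrow> \<psi> x \<ge> 0" and c: "c \<ge> 0"
    and le: "\<And>x. x \<in> {0..1} \<Longrightarrow> \<phi> x \<le> \<psi> x + c * integral {0..x} \<phi>"
  shows "integral {0..1} \<phi> \<le> exp c * integral {0..1} \<psi>"
proof -
  define U where "U x = integral {0..x} \<phi>" for x
  define Q where "Q x = integral {0..x} \<psi>" for x
  define G where "G x = exp (- c * x) * U x - Q x" for x
  define G' where "G' x = exp (- c * x) * (\<phi> x - c * U x) - \<psi> x" for x
  have dG: "(G has_real_derivative G' x) (at x within {0..1})" if x: "x \<in> {0..1}" for x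
  proof -
    have "(U has_real_derivative \<phi> x) (at x within {0..1})" "(Q has_real_derivative \<psi> x) (at x within {0..1})"
      unfolding U_def Q_def using c\<phi> c\<psi> x by (auto intro!: integral_has_real_derivative)
    then show ?thesis
      unfolding G_def G'_def by (auto intro!: derivative_eq_intros simp: algebra_simps)
  qed
  have "G 1 \<le> G 0"
  proof (rule has_real_derivative_nonpos_imp_nonincreasing[OF _ dG])
    fix x :: real assume x: "x \<in> {0..1}"
    have "exp (- c * x) * (\<phi> x - c * U x) \<le> exp (- c * x) * \<psi> x"
      using le[OF x] by (intro mult_left_mono) (auto simp: U_def)
    also have "\<dots> \<le> \<psi> x"
      using x c \<psi>[OF x] by (intro mult_left_le_one_le) auto
    finally show "G' x \<le> 0" by (simp add: G'_def)
  qed auto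
  then have "exp c * (exp (- c) * U 1) \<le> exp c * Q 1" by (simp add: G_def U_def Q_def)
  then show ?thesis by (simp add: U_def Q_def mult.assoc[symmetric] mult_exp_exp)
qed

definition backstepping :: "(real \<times> real \<Rightarrow> real) \<Rightarrow> (real \<Rightarrow> real) \<Rightarrow> real \<Rightarrow> real" where
  "backstepping k v x = v x - integral {0..x} (\<lambda>y. k (x, y) * v y)"

lemma backstepping_rescaled:
  assumes "0 \<le> x"
  shows "backstepping k v x = v x - x * integral {0..1} (\<lambda>s. k (x, x * s) * v (x * s))"
  using integral_rescale_unit_interval[of x "\<lambda>y. k (x, y) * v y"] assms
  by (simp add: backstepping_def)

lemma Volterra_integral_square_le:
  fixes h :: "real \<Rightarrow> real" and k :: "real \<times> real \<Rightarrow> real"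
  assumes kb: "\<And>p. p \<in> Tri \<Longrightarrow> \<bar>k p\<bar> \<le> K" and ch: "continuous_on {0..1} h"
    and x: "x \<in> {0..1}"
  shows "(integral {0..x} (\<lambda>y. k (x, y) * h y))^2 \<le> K^2 * integral {0..x} (\<lambda>y. (h y)^2)"
proof -
  define m where "m = integral {0..x} (\<lambda>y. \<bar>h y\<bar>)"
  have chx: "continuous_on {0..x} h" using ch x by (auto intro: continuous_on_subset)
  have "\<bar>integral {0..x} (\<lambda>y. k (x, y) * h y)\<bar> \<le> integral {0..x} (\<lambda>y. K * \<bar>h y\<bar>)"
  proof (rule abs_integral_le_integral)
    show "(\<lambda>y. K * \<bar>h y\<bar>) integrable_on {0..x}"
      using chx by (auto intro!: integrable_continuous_real continuous_intros)
    fix y assume "y \<in> {0..x}"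
    then have "\<bar>k (x, y)\<bar> \<le> K" using kb x by auto
    then show "\<bar>k (x, y) * h y\<bar> \<le> K * \<bar>h y\<bar>" by (simp add: abs_mult mult_right_mono)
  qed
  also have "\<dots> = K * m" by (simp add: m_def)
  finally have "\<bar>integral {0..x} (\<lambda>y. k (x, y) * h y)\<bar>^2 \<le> (K * m)^2"
    by (rule power_mono) simp
  also have "\<dots> = K^2 * m^2" by (simp add: power_mult_distrib)
  also have "\<dots> \<le> K^2 * (x * integral {0..x} (\<lambda>y. (h y)^2))"
    unfolding m_def by (rule mult_left_mono[OF Cauchy_Schwarz_integral_abs[OF chx]]) (use x in auto)
  also have "\<dots> \<le> K^2 * integral {0..x} (\<lambda>y. (h y)^2)"
    using x chx by (auto intro!: mult_left_mono mult_left_le_one_le integral_nonneg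
        integrable_continuous_real continuous_intros)
  finally show ?thesis by simp
qed

lemma square_add_le: "(a + b)^2 \<le> 2 * a^2 + 2 * (b::real)^2"
  using zero_le_power2[of "a - b"] by (simp add: power2_eq_square algebra_simps)

lemma integral_square_backstepping_le:
  fixes h :: "real \<Rightarrow> real" and k :: "real \<times> real \<Rightarrow> real"
  assumes kb: "\<And>p. p \<in> Tri \<Longrightarrow> \<bar>k p\<bar> \<le> K"
    and ch: "continuous_on {0..1} h" and cW: "continuous_on {0..1} (backstepping k h)"
  shows "integral {0..1} (\<lambda>x. (backstepping k h x)^2) \<le> (2 + 2 * K^2) * integral {0..1} (\<lambda>x. (h x)^2)"
proof -
  define H where "H = integral {0..1} (\<lambda>x. (h x)^2)"
  have ih: "(\<lambda>x. (h x)^2) integrable_on {0..1}"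
    using ch by (auto intro!: integrable_continuous_real continuous_intros)
  have "(backstepping k h x)^2 \<le> 2 * (h x)^2 + 2 * K^2 * H" if x: "x \<in> {0..1}" for x
  proof -
    have "(backstepping k h x)^2 \<le> 2 * (h x)^2 + 2 * (integral {0..x} (\<lambda>y. k (x, y) * h y))^2"
      using square_add_le[of "h x" "- integral {0..x} (\<lambda>y. k (x, y) * h y)"]
      by (simp add: backstepping_def)
    also have "(integral {0..x} (\<lambda>y. k (x, y) * h y))^2 \<le> K^2 * H"
    proof -
      have "integral {0..x} (\<lambda>y. (h y)^2) \<le> H"
        unfolding H_def by (rule integral_subset_le)
          (use x ch in \<open>auto intro!: integrable_continuous_real continuous_intros intro: continuous_on_subset\<close>)
      from mult_left_mono[OF this zero_le_power2[of K]] Volterra_integral_square_le[where k = k, OF kb ch x]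
      show ?thesis by linarith
    qed
    finally show ?thesis by simp
  qed
  then have "integral {0..1} (\<lambda>x. (backstepping k h x)^2) \<le> integral {0..1} (\<lambda>x. 2 * (h x)^2 + 2 * K^2 * H)"
    by (intro integral_le) (use ih cW ch in \<open>auto intro!: integrable_continuous_real continuous_intros\<close>)
  also have "\<dots> = 2 * H + 2 * K^2 * H"
  proof -
    have "(\<lambda>x::real. 2 * K^2 * H) integrable_on {0..1}"
      by (intro integrable_continuous_real continuous_intros)
    from integral_add[OF integrable_on_cmult_left[OF ih, of 2] this] show ?thesis
      by (simp add: H_def)
  qed
  finally show ?thesis by (simp add: H_def algebra_simps)
qed

lemma integral_square_le_backstepping:
  fixes h :: "real \<Rightarrow> real" and k :: "real \<times> real \<Rightarrow> real"
  assumes kb: "\<And>p. p \<in> Tri \<Longrightarrow> \<bar>k p\<bar> \<le> K"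
    and ch: "continuous_on {0..1} h" and cW: "continuous_on {0..1} (backstepping k h)"
  shows "integral {0..1} (\<lambda>x. (h x)^2) \<le> 2 * exp (2 * K^2) * integral {0..1} (\<lambda>x. (backstepping k h x)^2)"
proof -
  have "integral {0..1} (\<lambda>x. (h x)^2) \<le> exp (2 * K^2) * integral {0..1} (\<lambda>x. 2 * (backstepping k h x)^2)"
  proof (rule integral_Gronwall)
    fix x :: real assume x: "x \<in> {0..1}"
    have "(h x)^2 \<le> 2 * (backstepping k h x)^2 + 2 * (integral {0..x} (\<lambda>y. k (x, y) * h y))^2"
      using square_add_le[of "backstepping k h x" "integral {0..x} (\<lambda>y. k (x, y) * h y)"]
      by (simp add: backstepping_def)
    also have "\<dots> \<le> 2 * (backstepping k h x)^2 + 2 * K^2 * integral {0..x} (\<lambda>y. (h y)^2)"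
      using Volterra_integral_square_le[where k = k, OF kb ch x] by simp
    finally show "(h x)^2 \<le> 2 * (backstepping k h x)^2 + 2 * K^2 * integral {0..x} (\<lambda>y. (h y)^2)" .
  qed (use ch cW in \<open>auto intro!: continuous_intros\<close>)
  then show ?thesis by simp
qed


section \<open>The backstepping kernel\<close>

lemma continuous_attains_weighted_sup:
  fixes k \<omega> :: "'a::topological_space \<Rightarrow> real"
  assumes S: "compact S" "S \<noteq> {}" and ck: "continuous_on S k" and c\<omega>: "continuous_on S \<omega>"
    and pos: "\<And>p. p \<in> S \<Longrightarrow> \<omega> p > 0"
  obtains N p0 where "N \<ge> 0" "p0 \<in> S" "\<bar>k p0\<bar> = N * \<omega> p0" "\<And>p. p \<in> S \<Longrightarrow> \<bar>k p\<bar> \<le> N * \<omega> p"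
proof -
  have "\<forall>p\<in>S. \<omega> p \<noteq> 0" using pos by fastforce
  then have "continuous_on S (\<lambda>p. \<bar>k p\<bar> / \<omega> p)"
    by (intro continuous_intros ck c\<omega>)
  from continuous_attains_sup[OF S this]
  obtain p0 where p0: "p0 \<in> S" and max: "\<forall>p\<in>S. \<bar>k p\<bar> / \<omega> p \<le> \<bar>k p0\<bar> / \<omega> p0"
    by blast
  show ?thesis
  proof (rule that[of "\<bar>k p0\<bar> / \<omega> p0" p0])
    show "\<bar>k p\<bar> \<le> \<bar>k p0\<bar> / \<omega> p0 * \<omega> p" if "p \<in> S" for p
      using bspec[OF max that] pos[OF that] pos[OF p0] by (simp add: field_simps)
  qed (use p0 pos[OF p0] in simp_all)
qed

text \<open>Under the a priori bound \<open>|k(a, b)| \<le> N e\<^sup>l\<^sup>(\<^sup>2\<^sup>a\<^sup>-\<^sup>b\<^sup>)\<close>, each integration in the kernel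
  equation gains a factor \<open>1/l\<close>.\<close>

lemma kernel_g_term_bound:
  fixes g :: "real \<Rightarrow> real" and k :: "real \<times> real \<Rightarrow> real"
  assumes l: "l > 0" and s: "s \<in> {0..1}" and N: "N \<ge> 0"
    and gb: "\<And>x. x \<in> {0..1} \<Longrightarrow> \<bar>g x\<bar> \<le> Bg"
    and kN: "\<And>p. p \<in> Tri \<Longrightarrow> \<bar>k p\<bar> \<le> N * exp (l * (2 * fst p - snd p))"
  shows "\<bar>integral {0..s} (\<lambda>\<xi>. g \<xi> * k (s, \<xi>))\<bar> \<le> Bg * N * exp (2 * l * s) / l"
proof (rule abs_integral_le_exp_neg[OF l])
  fix \<xi> assume \<xi>: "\<xi> \<in> {0..s}"
  have "\<bar>g \<xi> * k (s, \<xi>)\<bar> \<le> Bg * (N * exp (l * (2 * s - \<xi>)))"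
    unfolding abs_mult using gb[of \<xi>] kN[of "(s, \<xi>)"] \<xi> s by (intro mult_mono) auto
  then show "\<bar>g \<xi> * k (s, \<xi>)\<bar> \<le> Bg * N * exp (2 * l * s) * exp (- l * \<xi>)"
    by (simp add: mult_exp_exp algebra_simps)
qed (use s in auto)

lemma kernel_f_term_bound:
  fixes f k :: "real \<times> real \<Rightarrow> real"
  assumes l: "l > 0" and xy: "(x, y) \<in> Tri" and N: "N \<ge> 0"
    and fb: "\<And>p. p \<in> Tri \<Longrightarrow> \<bar>f p\<bar> \<le> Bf"
    and kN: "\<And>p. p \<in> Tri \<Longrightarrow> \<bar>k p\<bar> \<le> N * exp (l * (2 * fst p - snd p))"
  shows "\<bar>integral {0..y} (\<lambda>\<eta>. integral {0..x - y} (\<lambda>\<xi>. f (\<xi> + \<eta>, \<eta>) * k (x - y + \<eta>, \<xi> + \<eta>)))\<bar>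
         \<le> Bf * N * exp (l * (2 * x - y)) / l^2"
proof -
  define s where "s = x - y"
  have s: "0 \<le> s" "s + y \<le> 1" "0 \<le> y" using xy by (auto simp: s_def)
  have "\<bar>integral {0..y} (\<lambda>\<eta>. integral {0..s} (\<lambda>\<xi>. f (\<xi> + \<eta>, \<eta>) * k (s + \<eta>, \<xi> + \<eta>)))\<bar>
      \<le> Bf * N * exp (2 * l * s) / l * exp (l * y) / l"
  proof (rule abs_integral_le_exp[OF l s(3)])
    fix \<eta> assume \<eta>: "\<eta> \<in> {0..y}"
    have "\<bar>integral {0..s} (\<lambda>\<xi>. f (\<xi> + \<eta>, \<eta>) * k (s + \<eta>, \<xi> + \<eta>))\<bar> \<le> Bf * N * exp (l * (2 * s + \<eta>)) / l"
    proof (rule abs_integral_le_exp_neg[OF l s(1)])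
      fix \<xi> assume \<xi>: "\<xi> \<in> {0..s}"
      have "\<bar>f (\<xi> + \<eta>, \<eta>) * k (s + \<eta>, \<xi> + \<eta>)\<bar> \<le> Bf * (N * exp (l * (2 * (s + \<eta>) - (\<xi> + \<eta>))))"
        unfolding abs_mult using fb[of "(\<xi> + \<eta>, \<eta>)"] kN[of "(s + \<eta>, \<xi> + \<eta>)"] \<xi> \<eta> s
        by (intro mult_mono) auto
      then show "\<bar>f (\<xi> + \<eta>, \<eta>) * k (s + \<eta>, \<xi> + \<eta>)\<bar> \<le> Bf * N * exp (l * (2 * s + \<eta>)) * exp (- l * \<xi>)"
        by (simp add: mult_exp_exp algebra_simps)
    qed
    then show "\<bar>integral {0..s} (\<lambda>\<xi>. f (\<xi> + \<eta>, \<eta>) * k (s + \<eta>, \<xi> + \<eta>))\<bar>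
        \<le> Bf * N * exp (2 * l * s) / l * exp (l * \<eta>)"
      by (simp add: mult_exp_exp algebra_simps)
  qed
  also have "\<dots> = Bf * N * exp (l * (2 * x - y)) / l^2"
    by (simp add: s_def mult_exp_exp power2_eq_square algebra_simps)
  finally show ?thesis by (simp add: s_def)
qed

lemma kernel_equation_weighted_bound:
  fixes g :: "real \<Rightarrow> real" and f k :: "real \<times> real \<Rightarrow> real"
  assumes KE: "kernel_equation g f k" and xy: "(x, y) \<in> Tri" and l: "l > 0" and N: "N \<ge> 0"
    and gb: "\<And>x. x \<in> {0..1} \<Longrightarrow> \<bar>g x\<bar> \<le> Bg"
    and fb: "\<And>p. p \<in> Tri \<Longrightarrow> \<bar>f p\<bar> \<le> Bf"
    and kN: "\<And>p. p \<in> Tri \<Longrightarrow> \<bar>k p\<bar> \<le> N * exp (l * (2 * fst p - snd p))"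
  shows "\<bar>k (x, y)\<bar> \<le> Bg + Bf + (Bg / l + Bf / l^2) * (N * exp (l * (2 * x - y)))"
proof -
  define E where "E = exp (l * (2 * x - y))"
  have s: "x - y \<in> {0..1}" using xy by auto
  have Bg: "Bg \<ge> 0" and Bf: "Bf \<ge> 0" using gb[of 0] fb[of "(0, 0)"] by auto
  have "\<bar>integral {0..y} (\<lambda>\<xi>. f (x - y + \<xi>, \<xi>))\<bar> \<le> integral {0..y} (\<lambda>\<xi>. Bf)"
    by (rule abs_integral_le_integral) (use fb xy in auto)
  also have "\<dots> \<le> Bf" using xy Bf mult_left_le_one_le[of Bf y] by simp
  finally have "\<bar>integral {0..y} (\<lambda>\<xi>. f (x - y + \<xi>, \<xi>))\<bar> \<le> Bf" .
  moreover have "k (x, y) = - g (x - y) - integral {0..y} (\<lambda>\<xi>. f (x - y + \<xi>, \<xi>))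
      + integral {0..x - y} (\<lambda>\<xi>. g \<xi> * k (x - y, \<xi>))
      + integral {0..y} (\<lambda>\<eta>. integral {0..x - y} (\<lambda>\<xi>. f (\<xi> + \<eta>, \<eta>) * k (x - y + \<eta>, \<xi> + \<eta>)))"
    using KE xy unfolding kernel_equation_def by fastforce
  moreover have "Bg * N * exp (2 * l * (x - y)) / l \<le> Bg * N * E / l"
    using Bg N l xy by (auto simp: E_def intro!: divide_right_mono mult_left_mono)
  moreover have "(Bg / l + Bf / l^2) * (N * E) = Bg * N * E / l + Bf * N * E / l^2"
    by (simp add: algebra_simps)
  ultimately show ?thesis
    using gb[OF s] kernel_g_term_bound[where g = g and k = k, OF l s N gb kN]
      kernel_f_term_bound[where f = f and k = k, OF l xy N fb kN]
    unfolding E_def by linarith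
qed

definition kernel_bound_const :: "real \<Rightarrow> real \<Rightarrow> real" where
  "kernel_bound_const Bg Bf = 2 * (Bg + Bf) * exp (8 * (Bg + Bf + 1))"

lemma kernel_bound:
  assumes gb: "\<And>x. x \<in> {0..1} \<Longrightarrow> \<bar>g x\<bar> \<le> Bg"
    and fb: "\<And>p. p \<in> Tri \<Longrightarrow> \<bar>f p\<bar> \<le> Bf"
    and KE: "kernel_equation g f k" and ck: "continuous_on Tri k" and p: "p \<in> Tri"
  shows "\<bar>k p\<bar> \<le> kernel_bound_const Bg Bf"
proof -
  define l where "l = 4 * (Bg + Bf + 1)"
  have Bg: "Bg \<ge> 0" and Bf: "Bf \<ge> 0" using gb[of 0] fb[of "(0, 0)"] by auto
  have l: "l \<ge> 1" using Bg Bf by (simp add: l_def)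
  then have l0: "l > 0" by simp
  have "Bf / l^2 \<le> Bf / l"
    using l Bf by (intro divide_left_mono) (auto simp: power2_eq_square)
  moreover have "Bg / l \<le> 1 / 4" and "Bf / l \<le> 1 / 4"
    using Bg Bf by (simp_all add: l_def field_simps)
  ultimately have small: "Bg / l + Bf / l^2 \<le> 1 / 2" by linarith
  \<comment> \<open>At a maximum point of \<open>|k(a, b)| e\<^sup>-\<^sup>l\<^sup>(\<^sup>2\<^sup>a\<^sup>-\<^sup>b\<^sup>)\<close> the integral terms are absorbed by \<open>small\<close>.\<close>
  obtain N p0 where N: "N \<ge> 0" and p0: "p0 \<in> Tri"
    and max: "\<bar>k p0\<bar> = N * exp (l * (2 * fst p0 - snd p0))"
    and kN: "\<And>p. p \<in> Tri \<Longrightarrow> \<bar>k p\<bar> \<le> N * exp (l * (2 * fst p - snd p))"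
    by (rule continuous_attains_weighted_sup[OF compact_Tri Tri_nonempty ck,
          of "\<lambda>p. exp (l * (2 * fst p - snd p))"])
       (auto intro!: continuous_intros)
  obtain x y where xy: "p0 = (x, y)" by fastforce
  define E where "E = exp (l * (2 * x - y))"
  have E: "E \<ge> 1" using p0 xy l by (simp add: E_def)
  have "N * E \<le> Bg + Bf + (Bg / l + Bf / l^2) * (N * E)"
    using kernel_equation_weighted_bound[OF KE p0[unfolded xy] l0 N gb fb kN] max xy
    by (simp add: E_def)
  also have "\<dots> \<le> Bg + Bf + 1 / 2 * (N * E)"
    using small N E by (intro add_left_mono mult_right_mono) auto
  finally have "N * E \<le> 2 * (Bg + Bf)" by simp
  then have "N \<le> 2 * (Bg + Bf)"
    using mult_left_mono[OF E N] by simp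
  then have "\<bar>k p\<bar> \<le> 2 * (Bg + Bf) * exp (l * (2 * fst p - snd p))"
    using order_trans[OF kN[OF p] mult_right_mono] by simp
  also have "\<dots> \<le> 2 * (Bg + Bf) * exp (2 * l)"
    using p l Bg Bf by (cases p) (auto intro!: mult_left_mono)
  finally show ?thesis by (simp add: kernel_bound_const_def l_def)
qed


lemma kernel_boundary_condition:
  assumes KE: "kernel_equation g f k" and x: "x \<in> {0..1}"
  shows "k (x, 0) = - g x + integral {0..x} (\<lambda>\<xi>. g \<xi> * k (x, \<xi>))"
  using bspec[OF KE[unfolded kernel_equation_def], of "(x, 0)"] x by simp

lemma continuous_on_kernel_f_term:
  fixes f k :: "real \<times> real \<Rightarrow> real"
  assumes cf: "continuous_on Tri f" and ck: "continuous_on Tri k" and s: "0 \<le> s"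
  shows "continuous_on {0..1 - s} (\<lambda>\<eta>. integral {0..s} (\<lambda>\<xi>. f (\<xi> + \<eta>, \<eta>) * k (s + \<eta>, \<xi> + \<eta>)))"
proof -
  define J where "J = {0..1 - s}"
  have mem: "(snd p + fst p, fst p) \<in> Tri" "(s + fst p, snd p + fst p) \<in> Tri"
    if "p \<in> J \<times> cbox 0 s" for p
    using that s by (auto simp: J_def)
  have "continuous_on (J \<times> cbox 0 s) (\<lambda>p. f (snd p + fst p, fst p))"
    by (rule continuous_on_compose_Tri[OF cf _ mem(1)]) (intro continuous_intros)
  moreover have "continuous_on (J \<times> cbox 0 s) (\<lambda>p. k (s + fst p, snd p + fst p))"
    by (rule continuous_on_compose_Tri[OF ck _ mem(2)]) (intro continuous_intros)
  ultimately have "continuous_on (J \<times> cbox 0 s) (\<lambda>(\<eta>, \<xi>). f (\<xi> + \<eta>, \<eta>) * k (s + \<eta>, \<xi> + \<eta>))"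
    by (auto simp: split_beta intro!: continuous_intros)
  from integral_continuous_on_param[OF this] show ?thesis
    by (simp add: J_def)
qed

lemma kernel_along_characteristic:
  assumes KE: "kernel_equation g f k" and s: "0 \<le> s" and y: "y \<in> {0..1 - s}"
    and cf: "continuous_on Tri f" and ck: "continuous_on Tri k"
  shows "k (s + y, y) = k (s, 0) + integral {0..y}
           (\<lambda>\<eta>. integral {0..s} (\<lambda>\<xi>. f (\<xi> + \<eta>, \<eta>) * k (s + \<eta>, \<xi> + \<eta>)) - f (s + \<eta>, \<eta>))"
proof -
  define I where "I \<eta> = integral {0..s} (\<lambda>\<xi>. f (\<xi> + \<eta>, \<eta>) * k (s + \<eta>, \<xi> + \<eta>))" for \<eta>
  have sub: "{0..y} \<subseteq> {0..1 - s}" using y by auto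
  have "I integrable_on {0..y}"
    unfolding I_def
    by (rule integrable_continuous_real, rule continuous_on_subset[OF continuous_on_kernel_f_term[OF cf ck s] sub])
  moreover have "(\<lambda>\<eta>. f (s + \<eta>, \<eta>)) integrable_on {0..y}"
    by (rule integrable_continuous_real, rule continuous_on_compose_Tri[OF cf])
       (use s y in \<open>auto intro!: continuous_intros\<close>)
  moreover have "k (s + y, y) = - g s - integral {0..y} (\<lambda>\<xi>. f (s + \<xi>, \<xi>))
                   + integral {0..s} (\<lambda>\<xi>. g \<xi> * k (s, \<xi>)) + integral {0..y} I"
    using bspec[OF KE[unfolded kernel_equation_def], of "(s + y, y)"] s y by (simp add: I_def[abs_def])
  moreover have "k (s, 0) = - g s + integral {0..s} (\<lambda>\<xi>. g \<xi> * k (s, \<xi>))"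
    by (rule kernel_boundary_condition[OF KE]) (use s y in auto)
  ultimately show ?thesis
    by (simp add: I_def[symmetric] integral_diff)
qed

lemma kernel_characteristic_pde:
  assumes KE: "kernel_equation g f k" and Ck: "C1_on_Tri k kx ky" and cf: "continuous_on Tri f"
    and xz: "(x, z) \<in> Tri" and x1: "x < 1"
  shows "kx (x, z) + ky (x, z) = - f (x, z) + integral {z..x} (\<lambda>y. f (y, z) * k (x, y))"
proof -
  define s where "s = x - z"
  define J where "J = {0..1 - s}"
  define I where "I \<eta> = integral {0..s} (\<lambda>\<xi>. f (\<xi> + \<eta>, \<eta>) * k (s + \<eta>, \<xi> + \<eta>))" for \<eta>
  have s: "0 \<le> s" "s < 1" and z: "z \<in> J" using xz x1 by (auto simp: s_def J_def)
  have ck: "continuous_on Tri k" using Ck by (rule C1_on_Tri_imp_continuous_on)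
  have "((\<lambda>y. k (s, 0) + integral {0..y} (\<lambda>\<eta>. I \<eta> - f (s + \<eta>, \<eta>))) has_real_derivative
       (I z - f (s + z, z))) (at z within J)"
  proof -
    have "continuous_on J (\<lambda>\<eta>. f (s + \<eta>, \<eta>))"
      by (rule continuous_on_compose_Tri[OF cf]) (use s in \<open>auto simp: J_def intro!: continuous_intros\<close>)
    then have "((\<lambda>y. integral {0..y} (\<lambda>\<eta>. I \<eta> - f (s + \<eta>, \<eta>))) has_real_derivative
        (I z - f (s + z, z))) (at z within {0..1 - s})"
      using continuous_on_kernel_f_term[OF cf ck s(1)] z
      by (intro integral_has_real_derivative) (auto simp: J_def I_def intro!: continuous_on_diff)
    then show ?thesis unfolding J_def by (auto intro!: derivative_eq_intros)
  qed
  moreover have "((\<lambda>y. k (s, 0) + integral {0..y} (\<lambda>\<eta>. I \<eta> - f (s + \<eta>, \<eta>))) has_real_derivative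
       (kx (s + z, z) + ky (s + z, z))) (at z within J)"
  proof -
    have "((\<lambda>y. k (s + y * 1, 0 + y * 1)) has_real_derivative
        (kx (s + z * 1, 0 + z * 1) * 1 + ky (s + z * 1, 0 + z * 1) * 1)) (at z within J)"
      by (rule C1_on_Tri_has_real_derivative_line[OF Ck z]) (use s in \<open>auto simp: J_def\<close>)
    then have "((\<lambda>y. k (s + y, y)) has_real_derivative (kx (s + z, z) + ky (s + z, z))) (at z within J)"
      by simp
    then show ?thesis
      by (rule has_field_derivative_transform_within[OF _ zero_less_one z])
         (use kernel_along_characteristic[OF KE s(1) _ cf ck] in \<open>auto simp: J_def I_def\<close>)
  qed
  ultimately have "kx (s + z, z) + ky (s + z, z) = I z - f (s + z, z)"
    using vector_derivative_unique_within_closed_interval[of 0 "1 - s" z] s z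
    unfolding J_def has_real_derivative_iff_has_vector_derivative by auto
  moreover have "I z = integral {z..x} (\<lambda>y. f (y, z) * k (x, y))"
    using integral_shift_Icc_real[of 0 s "\<lambda>y. f (y, z) * k (x, y)" z]
    by (simp add: I_def s_def o_def add.commute)
  ultimately show ?thesis by (simp add: s_def)
qed


lemma kernel_integration_by_parts:
  fixes k :: "real \<times> real \<Rightarrow> real"
  assumes Ck: "C1_on_Tri k kx ky"
    and dv: "\<And>y. y \<in> {0..1} \<Longrightarrow> (v has_real_derivative v' y) (at y within {0..1})"
    and cv: "continuous_on {0..1} v" and cv': "continuous_on {0..1} v'" and x: "x \<in> {0..1}"
  shows "integral {0..x} (\<lambda>y. k (x, y) * v' y)
       = k (x, x) * v x - k (x, 0) * v 0 - integral {0..x} (\<lambda>y. ky (x, y) * v y)"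
proof -
  have sub: "{0..x} \<subseteq> {0..1}" using x by auto
  have "((\<lambda>y. ky (x, y) * v y + k (x, y) * v' y) has_integral (k (x, x) * v x - k (x, 0) * v 0)) {0..x}"
  proof (rule fundamental_theorem_of_calculus)
    fix y assume y: "y \<in> {0..x}"
    have "((\<lambda>y. k (x + y * 0, 0 + y * 1)) has_real_derivative
        (kx (x + y * 0, 0 + y * 1) * 0 + ky (x + y * 0, 0 + y * 1) * 1)) (at y within {0..x})"
      by (rule C1_on_Tri_has_real_derivative_line[OF Ck y]) (use x in auto)
    moreover have "(v has_real_derivative v' y) (at y within {0..x})"
      using has_field_derivative_subset[OF dv sub] y sub by auto
    ultimately show "((\<lambda>y. k (x, y) * v y) has_vector_derivative (ky (x, y) * v y + k (x, y) * v' y))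
        (at y within {0..x})"
      unfolding has_real_derivative_iff_has_vector_derivative[symmetric]
      by (auto intro!: derivative_eq_intros)
  qed (use x in auto)
  moreover have "integral {0..x} (\<lambda>y. ky (x, y) * v y + k (x, y) * v' y)
      = integral {0..x} (\<lambda>y. ky (x, y) * v y) + integral {0..x} (\<lambda>y. k (x, y) * v' y)"
  proof (rule integral_add)
    have "continuous_on {0..x} (\<lambda>y. k (x, y))" "continuous_on {0..x} (\<lambda>y. ky (x, y))"
      using continuous_on_Tri_slice[OF C1_on_Tri_imp_continuous_on[OF Ck]] Ck x
        continuous_on_Tri_slice[of ky x] by (auto simp: C1_on_Tri_def)
    then show "(\<lambda>y. ky (x, y) * v y) integrable_on {0..x}" "(\<lambda>y. k (x, y) * v' y) integrable_on {0..x}"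
      using continuous_on_subset[OF cv sub] continuous_on_subset[OF cv' sub]
      by (auto intro!: integrable_continuous_real continuous_intros)
  qed
  ultimately show ?thesis by (simp add: integral_unique)
qed

text \<open>Fubini on the triangle \<open>0 \<le> z \<le> y \<le> x\<close> followed by the characteristic PDE of the kernel.\<close>

lemma kernel_Volterra_composition:
  fixes k :: "real \<times> real \<Rightarrow> real"
  assumes KE: "kernel_equation g f k" and Ck: "C1_on_Tri k kx ky" and cf: "continuous_on Tri f"
    and cv: "continuous_on {0..1} v" and x: "x \<in> {0..<1}"
  shows "integral {0..x} (\<lambda>y. k (x, y) * integral {0..y} (\<lambda>z. f (y, z) * v z))
       = integral {0..x} (\<lambda>z. kx (x, z) * v z) + integral {0..x} (\<lambda>z. ky (x, z) * v z)
         + integral {0..x} (\<lambda>z. f (x, z) * v z)"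
proof -
  have ck: "continuous_on Tri k" and ckx: "continuous_on Tri kx" and cky: "continuous_on Tri ky"
    using Ck C1_on_Tri_imp_continuous_on[OF Ck] by (auto simp: C1_on_Tri_def)
  have cH: "continuous_on {(y, z). 0 \<le> z \<and> z \<le> y \<and> y \<le> x} (\<lambda>p. k (x, fst p) * f p * v (snd p))"
  proof (intro continuous_intros)
    show "continuous_on {(y, z). 0 \<le> z \<and> z \<le> y \<and> y \<le> x} (\<lambda>p. k (x, fst p))"
      by (rule continuous_on_compose_Tri[OF ck]) (use x in \<open>auto intro!: continuous_intros\<close>)
    show "continuous_on {(y, z). 0 \<le> z \<and> z \<le> y \<and> y \<le> x} f"
      by (rule continuous_on_subset[OF cf]) (use x in auto)
    show "continuous_on {(y, z). 0 \<le> z \<and> z \<le> y \<and> y \<le> x} (\<lambda>p. v (snd p))"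
      by (rule continuous_on_compose2[OF cv]) (use x in \<open>auto intro!: continuous_intros\<close>)
  qed
  have "integral {0..x} (\<lambda>y. k (x, y) * integral {0..y} (\<lambda>z. f (y, z) * v z))
      = integral {0..x} (\<lambda>y. integral {0..y} (\<lambda>z. k (x, y) * f (y, z) * v z))"
    by (simp only: integral_mult_right mult.assoc)
  also have "\<dots> = integral {0..x} (\<lambda>z. integral {z..x} (\<lambda>y. k (x, y) * f (y, z) * v z))"
    using integral_triangle_swap[OF cH] by simp
  also have "\<dots> = integral {0..x} (\<lambda>z. kx (x, z) * v z + ky (x, z) * v z + f (x, z) * v z)"
  proof (rule integral_cong)
    fix z assume z: "z \<in> {0..x}"
    have "integral {z..x} (\<lambda>y. k (x, y) * f (y, z) * v z) = integral {z..x} (\<lambda>y. f (y, z) * k (x, y)) * v z"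
      by (simp add: integral_mult_left[symmetric] mult_ac)
    also have "integral {z..x} (\<lambda>y. f (y, z) * k (x, y)) = kx (x, z) + ky (x, z) + f (x, z)"
      using kernel_characteristic_pde[OF KE Ck cf, of x z] z x by simp
    finally show "integral {z..x} (\<lambda>y. k (x, y) * f (y, z) * v z)
        = kx (x, z) * v z + ky (x, z) * v z + f (x, z) * v z"
      by (simp add: algebra_simps)
  qed
  also have "\<dots> = integral {0..x} (\<lambda>z. kx (x, z) * v z) + integral {0..x} (\<lambda>z. ky (x, z) * v z)
         + integral {0..x} (\<lambda>z. f (x, z) * v z)"
    using continuous_on_Tri_slice[OF ckx, of x] continuous_on_Tri_slice[OF cky, of x]
      continuous_on_Tri_slice[OF cf, of x] continuous_on_subset[OF cv, of "{0..x}"] x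
    by (simp add: integral_add integrable_add integrable_continuous_real continuous_intros)
  finally show ?thesis .
qed

text \<open>The transformation turns the plant into the target system: if \<open>vt\<close> is the right-hand side of
  the plant for the state \<open>v\<close>, the transform of \<open>vt\<close> is the \<open>x\<close>-derivative of \<open>backstepping k v\<close>.\<close>

lemma backstepping_target_system:
  fixes k :: "real \<times> real \<Rightarrow> real"
  assumes KE: "kernel_equation g f k" and Ck: "C1_on_Tri k kx ky" and Cf: "C1_on_Tri f fx fy"
    and cg: "continuous_on {0..1} g"
    and dv: "\<And>y. y \<in> {0..1} \<Longrightarrow> (v has_real_derivative v' y) (at y within {0..1})"
    and cv': "continuous_on {0..1} v'"
    and plant: "\<And>y. y \<in> {0..<1} \<Longrightarrow> vt y = v' y + g y * v 0 + integral {0..y} (\<lambda>z. f (y, z) * v z)"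
    and x: "x \<in> {0..<1}"
  shows "backstepping k vt x = v' x - k (x, x) * v x - integral {0..x} (\<lambda>y. kx (x, y) * v y)"
proof -
  have sub: "{0..x} \<subseteq> {0..1}" using x by auto
  have ck: "continuous_on Tri k" using Ck by (rule C1_on_Tri_imp_continuous_on)
  have cf: "continuous_on Tri f" using Cf by (rule C1_on_Tri_imp_continuous_on)
  have cv: "continuous_on {0..1} v"
    using dv by (meson DERIV_continuous continuous_on_eq_continuous_within)
  define A where "A y = integral {0..y} (\<lambda>z. f (y, z) * v z)" for y
  have cA: "continuous_on {0..1} A"
    using continuous_on_Volterra_integral[OF C1_on_Tri_mult[OF Cf C1_on_Tri_snd[OF dv cv']]]
    by (simp add: A_def[abs_def])
  have ints: "(\<lambda>y. k (x, y) * v' y) integrable_on {0..x}" "(\<lambda>y. g y * k (x, y)) integrable_on {0..x}"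
    "(\<lambda>y. k (x, y) * A y) integrable_on {0..x}"
    using continuous_on_Tri_slice[OF ck, of x] continuous_on_subset[OF cv' sub]
      continuous_on_subset[OF cg sub] continuous_on_subset[OF cA sub] x
    by (auto intro!: integrable_continuous_real continuous_intros)
  have "integral {0..x} (\<lambda>y. k (x, y) * vt y)
      = integral {0..x} (\<lambda>y. k (x, y) * v' y + v 0 * (g y * k (x, y)) + k (x, y) * A y)"
    by (rule integral_cong) (use plant x in \<open>auto simp: A_def algebra_simps\<close>)
  also have "\<dots> = integral {0..x} (\<lambda>y. k (x, y) * v' y) + v 0 * integral {0..x} (\<lambda>y. g y * k (x, y))
      + integral {0..x} (\<lambda>y. k (x, y) * A y)"
    using ints by (simp add: integral_add integrable_add integrable_on_mult_right)
  finally show ?thesis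
    using kernel_integration_by_parts[OF Ck dv cv cv', of x]
      kernel_boundary_condition[OF KE, of x] kernel_Volterra_composition[OF KE Ck cf cv x]
      plant[OF x] x
    by (simp add: backstepping_def A_def algebra_simps)
qed


section \<open>The Lyapunov functional of the target system\<close>

lemma continuous_on_backstepping_param:
  fixes k F :: "real \<times> real \<Rightarrow> real"
  assumes ck: "continuous_on Tri k" and cF: "continuous_on ({0..1} \<times> {0..}) F"
  shows "continuous_on ({0..} \<times> {0..1}) (\<lambda>(t, x). backstepping k (\<lambda>y. F (y, t)) x)"
proof -
  let ?D = "({0..} \<times> {0..1}) \<times> cbox 0 (1::real)"
  have "continuous_on ?D (\<lambda>p. k (snd (fst p), snd (fst p) * snd p))"
    by (rule continuous_on_compose_Tri[OF ck]) (auto intro!: continuous_intros simp: mult_left_le)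
  moreover have "continuous_on ?D (\<lambda>p. F (snd (fst p) * snd p, fst (fst p)))"
    by (rule continuous_on_compose2[OF cF]) (auto intro!: continuous_intros intro: mult_le_one)
  ultimately have "continuous_on ?D (\<lambda>(p, s). k (snd p, snd p * s) * F (snd p * s, fst p))"
    by (auto simp: split_beta intro!: continuous_intros)
  moreover have "continuous_on ({0..} \<times> {0..1}) (\<lambda>p. F (snd p, fst p))"
    by (rule continuous_on_compose2[OF cF]) (auto intro!: continuous_intros)
  ultimately have "continuous_on ({0..} \<times> {0..1})
      (\<lambda>p. F (snd p, fst p) - snd p * integral (cbox 0 1) (\<lambda>s. k (snd p, snd p * s) * F (snd p * s, fst p)))"
    by (intro continuous_intros integral_continuous_on_param)
  then show ?thesis
    by (rule continuous_on_eq) (auto simp: backstepping_rescaled)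
qed

definition lyapunov :: "(real \<Rightarrow> real) \<Rightarrow> real" where
  "lyapunov w = integral {0..1} (\<lambda>x. exp x * (w x)^2)"

lemma integral_square_le_lyapunov:
  assumes "continuous_on {0..1} w"
  shows "integral {0..1} (\<lambda>x. (w x)^2) \<le> lyapunov w"
proof -
  have "(w x)^2 \<le> exp x * (w x)^2" if "x \<in> {0..1}" for x
    using mult_right_mono[of 1 "exp x" "(w x)^2"] that by simp
  then show ?thesis
    unfolding lyapunov_def
    by (intro integral_le) (use assms in \<open>auto intro!: integrable_continuous_real continuous_intros\<close>)
qed

lemma lyapunov_le:
  assumes "continuous_on {0..1} w"
  shows "lyapunov w \<le> exp 1 * integral {0..1} (\<lambda>x. (w x)^2)"
proof -
  have "lyapunov w \<le> integral {0..1} (\<lambda>x. exp 1 * (w x)^2)"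
    unfolding lyapunov_def
    by (rule integral_le) (use assms in \<open>auto intro!: integrable_continuous_real continuous_intros mult_right_mono\<close>)
  then show ?thesis by simp
qed

lemma lyapunov_derivative_identity:
  assumes dw: "\<And>x. x \<in> {0..1} \<Longrightarrow> (w has_real_derivative w' x) (at x within {0..1})"
  shows "integral {0..1} (\<lambda>x. exp x * (2 * w x * w' x)) = exp 1 * (w 1)^2 - (w 0)^2 - lyapunov w"
proof -
  have "((\<lambda>x. exp x * (w x)^2 + exp x * (2 * w x * w' x)) has_integral (exp 1 * (w 1)^2 - exp 0 * (w 0)^2)) {0..1}"
    by (rule fundamental_theorem_of_calculus)
       (use dw in \<open>auto intro!: derivative_eq_intros simp: has_real_derivative_iff_has_vector_derivative[symmetric]\<close>)
  moreover have "continuous_on {0..1} w"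
    using dw by (meson DERIV_continuous continuous_on_eq_continuous_within)
  then have "((\<lambda>x. exp x * (w x)^2) has_integral lyapunov w) {0..1}"
    unfolding lyapunov_def by (auto intro!: integrable_integral integrable_continuous_real continuous_intros)
  ultimately have "((\<lambda>x. exp x * (2 * w x * w' x)) has_integral (exp 1 * (w 1)^2 - (w 0)^2 - lyapunov w)) {0..1}"
    by (auto dest: has_integral_diff)
  then show ?thesis by (rule integral_unique)
qed

locale classical_solution =
  fixes u :: "real \<Rightarrow> real \<Rightarrow> real" and ux ut :: "real \<times> real \<Rightarrow> real"
  assumes continuous_ux: "continuous_on ({0..1} \<times> {0..}) ux"
    and continuous_ut: "continuous_on ({0..1} \<times> {0..}) ut"
    and has_derivative_u: "\<And>p. p \<in> {0..1} \<times> {0..} \<Longrightarrow>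
      ((\<lambda>(x, t). u x t) has_derivative (\<lambda>(a, b). ux p * a + ut p * b)) (at p within {0..1} \<times> {0..})"
begin

lemma has_real_derivative_x:
  assumes t: "t \<ge> 0" and y: "y \<in> {0..1}"
  shows "((\<lambda>y. u y t) has_real_derivative ux (y, t)) (at y within {0..1})"
proof -
  have "((\<lambda>y. (y, t)) has_derivative (\<lambda>h. (h, 0))) (at y within {0..1})"
    by (auto intro!: derivative_eq_intros)
  then have "((\<lambda>y. (\<lambda>(x, t). u x t) (y, t)) has_derivative
      (\<lambda>h. (\<lambda>(a, b). ux (y, t) * a + ut (y, t) * b) (h, 0))) (at y within {0..1})"
    by (intro has_derivative_in_compose2[OF has_derivative_u _ y]) (use t in auto)
  then have "((\<lambda>y. u y t) has_derivative (\<lambda>h. ux (y, t) * h)) (at y within {0..1})" by simp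
  then show ?thesis unfolding has_field_derivative_def by simp
qed

lemma has_real_derivative_t:
  assumes t: "t \<ge> 0" and y: "y \<in> {0..1}"
  shows "((\<lambda>t. u y t) has_real_derivative ut (y, t)) (at t within {0..})"
proof -
  have "((\<lambda>t. (y, t)) has_derivative (\<lambda>h. (0, h))) (at t within {0..})"
    by (auto intro!: derivative_eq_intros)
  then have "((\<lambda>t. (\<lambda>(x, t). u x t) (y, t)) has_derivative
      (\<lambda>h. (\<lambda>(a, b). ux (y, t) * a + ut (y, t) * b) (0, h))) (at t within {0..})"
    by (intro has_derivative_in_compose2[OF has_derivative_u _ t[folded atLeast_iff]]) (use y in auto)
  then have "((\<lambda>t. u y t) has_derivative (\<lambda>h. ut (y, t) * h)) (at t within {0..})" by simp
  then show ?thesis unfolding has_field_derivative_def by simp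
qed

lemma continuous_on_u: "continuous_on ({0..1} \<times> {0..}) (\<lambda>(x, t). u x t)"
  using has_derivative_u by (meson continuous_on_eq_continuous_within has_derivative_continuous)

lemma continuous_on_u_compose:
  assumes "continuous_on A p" "continuous_on A q" "\<And>a. a \<in> A \<Longrightarrow> p a \<in> {0..1}" "\<And>a. a \<in> A \<Longrightarrow> q a \<ge> 0"
  shows "continuous_on A (\<lambda>a. u (p a) (q a))"
proof -
  have "continuous_on A (\<lambda>a. (\<lambda>(x, t). u x t) (p a, q a))"
    by (rule continuous_on_compose2[OF continuous_on_u]) (use assms in \<open>auto intro!: continuous_intros\<close>)
  then show ?thesis by simp
qed

lemma continuous_on_u_slice: "t \<ge> 0 \<Longrightarrow> continuous_on {0..1} (\<lambda>x. u x t)"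
  by (rule continuous_on_u_compose) (auto intro!: continuous_intros)

lemma continuous_on_ux_slice: "t \<ge> 0 \<Longrightarrow> continuous_on {0..1} (\<lambda>x. ux (x, t))"
  by (rule continuous_on_compose2[OF continuous_ux]) (auto intro!: continuous_intros)

end

locale backstepping_plant = classical_solution u ux ut
  for u :: "real \<Rightarrow> real \<Rightarrow> real" and ux ut :: "real \<times> real \<Rightarrow> real" +
  fixes g :: "real \<Rightarrow> real" and f fx fy k kx ky :: "real \<times> real \<Rightarrow> real"
  assumes kernel: "kernel_equation g f k" and C1_k: "C1_on_Tri k kx ky" and C1_f: "C1_on_Tri f fx fy"
    and continuous_g: "continuous_on {0..1} g"
    and plant: "\<And>x t. x \<in> {0..<1} \<Longrightarrow> t \<ge> 0 \<Longrightarrow>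
      ut (x, t) = ux (x, t) + g x * u 0 t + integral {0..x} (\<lambda>y. f (x, y) * u y t)"
begin

definition "w x t = backstepping k (\<lambda>y. u y t) x"
definition "wt x t = backstepping k (\<lambda>y. ut (y, t)) x"
definition "wx x t = ux (x, t) - k (x, x) * u x t - integral {0..x} (\<lambda>y. kx (x, y) * u y t)"
definition "V t = lyapunov (\<lambda>x. w x t)"

lemma continuous_k: "continuous_on Tri k"
  using C1_k by (rule C1_on_Tri_imp_continuous_on)

lemma continuous_on_w: "continuous_on ({0..} \<times> {0..1}) (\<lambda>(t, x). w x t)"
  using continuous_on_backstepping_param[OF continuous_k continuous_on_u] by (simp add: w_def)

lemma continuous_on_wt: "continuous_on ({0..} \<times> {0..1}) (\<lambda>(t, x). wt x t)"
  using continuous_on_backstepping_param[OF continuous_k continuous_ut] by (simp add: wt_def)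

lemma continuous_on_w_slice:
  assumes "t \<ge> 0" shows "continuous_on {0..1} (\<lambda>x. w x t)"
proof -
  have "continuous_on {0..1} (\<lambda>x. (\<lambda>(t, x). w x t) (t, x))"
    by (rule continuous_on_compose2[OF continuous_on_w]) (use assms in \<open>auto intro!: continuous_intros\<close>)
  then show ?thesis by simp
qed

lemma continuous_on_backstepping_slice: "t \<ge> 0 \<Longrightarrow> continuous_on {0..1} (backstepping k (\<lambda>y. u y t))"
  using continuous_on_w_slice by (simp add: w_def)

lemma w_has_real_derivative_t:
  assumes x: "x \<in> {0..1}" and t: "t \<ge> 0"
  shows "((\<lambda>t. w x t) has_real_derivative wt x t) (at t within {0..})"
proof -
  have ck: "continuous_on (T \<times> cbox 0 1) (\<lambda>p. k (x, x * snd p))" for T :: "real set"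
    by (rule continuous_on_compose_Tri[OF continuous_k]) (use x in \<open>auto intro!: continuous_intros simp: mult_left_le\<close>)
  have "continuous_on ({0..} \<times> cbox 0 1) (\<lambda>p. ut (x * snd p, fst p))"
    by (rule continuous_on_compose2[OF continuous_ut]) (use x in \<open>auto intro!: continuous_intros simp: mult_le_one\<close>)
  with ck have "continuous_on ({0..} \<times> cbox 0 1) (\<lambda>(t, s). k (x, x * s) * ut (x * s, t))"
    by (auto simp: split_beta intro!: continuous_intros)
  moreover have "(\<lambda>s. k (x, x * s) * u (x * s) t') integrable_on cbox 0 1" if "t' \<in> {0..}" for t'
  proof -
    have "continuous_on (cbox 0 1) (\<lambda>s. k (x, x * s))"
      by (rule continuous_on_compose_Tri[OF continuous_k]) (use x in \<open>auto intro!: continuous_intros simp: mult_left_le\<close>)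
    moreover have "continuous_on (cbox 0 1) (\<lambda>s. u (x * s) t')"
      by (rule continuous_on_u_compose) (use x that in \<open>auto intro!: continuous_intros simp: mult_le_one\<close>)
    ultimately show ?thesis by (intro integrable_continuous continuous_intros)
  qed
  moreover have "((\<lambda>t. k (x, x * s) * u (x * s) t) has_real_derivative k (x, x * s) * ut (x * s, t'))
      (at t' within {0..})" if "t' \<in> {0..}" "s \<in> cbox 0 1" for t' s
    using has_real_derivative_t[of t' "x * s"] that x by (auto simp: mult_le_one intro!: derivative_eq_intros)
  ultimately have "((\<lambda>t. integral (cbox 0 1) (\<lambda>s. k (x, x * s) * u (x * s) t)) has_real_derivative
      integral (cbox 0 1) (\<lambda>s. k (x, x * s) * ut (x * s, t))) (at t within {0..})"
    using t by (intro leibniz_rule_field_derivative) auto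
  with has_real_derivative_t[OF t x]
  have "((\<lambda>t. u x t - x * integral {0..1} (\<lambda>s. k (x, x * s) * u (x * s) t)) has_real_derivative
      ut (x, t) - x * integral {0..1} (\<lambda>s. k (x, x * s) * ut (x * s, t))) (at t within {0..})"
    by (auto intro!: derivative_eq_intros)
  then show ?thesis
    using x by (simp add: w_def wt_def backstepping_rescaled)
qed

lemma w_has_real_derivative_x:
  assumes x: "x \<in> {0..1}" and t: "t \<ge> 0"
  shows "((\<lambda>x. w x t) has_real_derivative wx x t) (at x within {0..1})"
proof -
  have "C1_on_Tri (\<lambda>p. u (snd p) t) (\<lambda>p. 0) (\<lambda>p. ux (snd p, t))"
    by (rule C1_on_Tri_snd) (use has_real_derivative_x[OF t] continuous_on_ux_slice[OF t] in auto)
  from Volterra_integral_has_real_derivative[OF C1_on_Tri_mult[OF C1_k this] x]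
  have "((\<lambda>x. integral {0..x} (\<lambda>y. k (x, y) * u y t)) has_real_derivative
      (k (x, x) * u x t + integral {0..x} (\<lambda>y. kx (x, y) * u y t))) (at x within {0..1})"
    by simp
  then show ?thesis
    unfolding w_def wx_def backstepping_def
    using has_real_derivative_x[OF t x] by (auto intro!: derivative_eq_intros)
qed

lemma wt_eq_wx:
  assumes "x \<in> {0..<1}" and "t \<ge> 0"
  shows "wt x t = wx x t"
  unfolding wt_def wx_def
  by (rule backstepping_target_system[OF kernel C1_k C1_f continuous_g])
     (use assms has_real_derivative_x continuous_on_ux_slice plant in auto)

lemma V_has_real_derivative:
  assumes t: "t \<ge> 0"
  shows "(V has_real_derivative integral {0..1} (\<lambda>x. exp x * (2 * w x t * wt x t))) (at t within {0..})"
  unfolding V_def lyapunov_def cbox_interval[symmetric]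
proof (rule leibniz_rule_field_derivative)
  fix t' x :: real assume "t' \<in> {0..}" and "x \<in> cbox 0 1"
  then show "((\<lambda>t. exp x * (w x t)^2) has_real_derivative exp x * (2 * w x t' * wt x t')) (at t' within {0..})"
    using w_has_real_derivative_t[of x t'] by (auto intro!: derivative_eq_intros)
next
  fix t' :: real assume "t' \<in> {0..}"
  then show "(\<lambda>x. exp x * (w x t')^2) integrable_on cbox 0 1"
    using continuous_on_w_slice[of t'] by (auto intro!: integrable_continuous_real continuous_intros)
next
  show "continuous_on ({0..} \<times> cbox 0 1) (\<lambda>(t, x). exp x * (2 * w x t * wt x t))"
    using continuous_on_w continuous_on_wt by (auto simp: split_beta intro!: continuous_intros)
qed (use t in auto)

lemma V_derivative_eq:
  assumes t: "t \<ge> 0"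
  shows "integral {0..1} (\<lambda>x. exp x * (2 * w x t * wt x t)) = exp 1 * (w 1 t)^2 - (w 0 t)^2 - V t"
proof -
  have "integral {0..1} (\<lambda>x. exp x * (2 * w x t * wt x t)) = integral {0..1} (\<lambda>x. exp x * (2 * w x t * wx x t))"
    by (rule integral_spike[of "{1}"]) (use wt_eq_wx t in auto)
  also have "\<dots> = exp 1 * (w 1 t)^2 - (w 0 t)^2 - V t"
    unfolding V_def by (rule lyapunov_derivative_identity) (use w_has_real_derivative_x t in auto)
  finally show ?thesis .
qed

end


locale closed_loop = backstepping_plant u ux ut g f fx fy k kx ky
  for u :: "real \<Rightarrow> real \<Rightarrow> real" and ux ut :: "real \<times> real \<Rightarrow> real"
    and g :: "real \<Rightarrow> real" and f fx fy k kx ky :: "real \<times> real \<Rightarrow> real" +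
  fixes khat :: "real \<times> real \<Rightarrow> real" and \<epsilon> K :: real
  assumes feedback: "\<And>t. t \<ge> 0 \<Longrightarrow> u 1 t = integral {0..1} (\<lambda>y. khat (1, y) * u y t)"
    and continuous_khat: "continuous_on Tri khat"
    and khat_close: "\<And>y. y \<in> {0..1} \<Longrightarrow> \<bar>khat (1, y) - k (1, y)\<bar> \<le> \<epsilon>"
    and kernel_bounded: "\<And>p. p \<in> Tri \<Longrightarrow> \<bar>k p\<bar> \<le> K"
    and gain_small: "exp 1 * \<epsilon>^2 * (2 * exp (2 * K^2)) \<le> 1 / 2"
begin

lemma w_1_square_le:
  assumes t: "t \<ge> 0"
  shows "(w 1 t)^2 \<le> \<epsilon>^2 * integral {0..1} (\<lambda>y. (u y t)^2)"
proof -
  have cu: "continuous_on {0..1} (\<lambda>y. u y t)" by (rule continuous_on_u_slice[OF t])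
  have "w 1 t = integral {0..1} (\<lambda>y. khat (1, y) * u y t) - integral {0..1} (\<lambda>y. k (1, y) * u y t)"
    using feedback[OF t] by (simp add: w_def backstepping_def)
  also have "\<dots> = integral {0..1} (\<lambda>y. (khat (1, y) - k (1, y)) * u y t)"
    using continuous_on_Tri_slice[OF continuous_khat, of 1] continuous_on_Tri_slice[OF continuous_k, of 1] cu
    by (subst integral_diff[symmetric])
       (auto intro!: integrable_continuous_real continuous_intros simp: algebra_simps)
  finally have w1: "w 1 t = integral {0..1} (\<lambda>y. (khat (1, y) - k (1, y)) * u y t)" .
  have "\<bar>w 1 t\<bar> \<le> integral {0..1} (\<lambda>y. \<epsilon> * \<bar>u y t\<bar>)"
    unfolding w1
  proof (rule abs_integral_le_integral)
    show "(\<lambda>y. \<epsilon> * \<bar>u y t\<bar>) integrable_on {0..1}"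
      using cu by (auto intro!: integrable_continuous_real continuous_intros)
    fix y :: real assume "y \<in> {0..1}"
    then show "\<bar>(khat (1, y) - k (1, y)) * u y t\<bar> \<le> \<epsilon> * \<bar>u y t\<bar>"
      using khat_close by (simp add: abs_mult mult_right_mono)
  qed
  then have "\<bar>w 1 t\<bar>^2 \<le> (\<epsilon> * integral {0..1} (\<lambda>y. \<bar>u y t\<bar>))^2"
    by (intro power_mono) auto
  also have "\<dots> = \<epsilon>^2 * (integral {0..1} (\<lambda>y. \<bar>u y t\<bar>))^2" by (simp add: power_mult_distrib)
  also have "\<dots> \<le> \<epsilon>^2 * (1 * integral {0..1} (\<lambda>y. (u y t)^2))"
    by (rule mult_left_mono[OF Cauchy_Schwarz_integral_abs[OF cu]]) auto
  finally show ?thesis by simp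
qed

lemma integral_square_u_le:
  assumes "t \<ge> 0"
  shows "integral {0..1} (\<lambda>x. (u x t)^2) \<le> 2 * exp (2 * K^2) * integral {0..1} (\<lambda>x. (w x t)^2)"
  using integral_square_le_backstepping[OF kernel_bounded continuous_on_u_slice[OF assms]
      continuous_on_backstepping_slice[OF assms]]
  by (simp add: w_def)

lemma integral_square_w_le:
  assumes "t \<ge> 0"
  shows "integral {0..1} (\<lambda>x. (w x t)^2) \<le> (2 + 2 * K^2) * integral {0..1} (\<lambda>x. (u x t)^2)"
  using integral_square_backstepping_le[OF kernel_bounded continuous_on_u_slice[OF assms]
      continuous_on_backstepping_slice[OF assms]]
  by (simp add: w_def)

lemma V_derivative_le:
  assumes t: "t \<ge> 0"
  shows "integral {0..1} (\<lambda>x. exp x * (2 * w x t * wt x t)) \<le> - V t / 2"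
proof -
  define Q where "Q = integral {0..1} (\<lambda>x. (w x t)^2)"
  have Q: "0 \<le> Q" "Q \<le> V t"
    using continuous_on_w_slice[OF t] integral_square_le_lyapunov[OF continuous_on_w_slice[OF t]]
    by (auto simp: Q_def V_def intro!: integral_nonneg integrable_continuous_real continuous_intros)
  have "(w 1 t)^2 \<le> \<epsilon>^2 * (2 * exp (2 * K^2) * Q)"
    using w_1_square_le[OF t] mult_left_mono[OF integral_square_u_le[OF t], of "\<epsilon>^2"]
    by (simp add: Q_def)
  then have "exp 1 * (w 1 t)^2 \<le> exp 1 * (\<epsilon>^2 * (2 * exp (2 * K^2) * Q))" by simp
  also have "\<dots> = (exp 1 * \<epsilon>^2 * (2 * exp (2 * K^2))) * Q" by simp
  also have "\<dots> \<le> 1 / 2 * V t"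
    using gain_small Q by (intro mult_mono) auto
  finally show ?thesis
    using V_derivative_eq[OF t] zero_le_power2[of "w 0 t"] by linarith
qed

lemma V_decay:
  assumes t: "t \<ge> 0"
  shows "V t \<le> exp (- t / 2) * V 0"
proof -
  define \<phi> where "\<phi> s = exp (s / 2) * V s" for s
  define \<phi>' where "\<phi>' s = exp (s / 2) * (1 / 2) * V s + exp (s / 2) * integral {0..1} (\<lambda>x. exp x * (2 * w x s * wt x s))" for s
  have "\<phi> t \<le> \<phi> 0"
  proof (rule has_real_derivative_nonpos_imp_nonincreasing[OF t])
    fix s assume s: "s \<in> {0..t}"
    have "(V has_real_derivative integral {0..1} (\<lambda>x. exp x * (2 * w x s * wt x s))) (at s within {0..t})"
      by (rule has_field_derivative_subset[OF V_has_real_derivative]) (use s in auto)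
    then show "(\<phi> has_real_derivative \<phi>' s) (at s within {0..t})"
      unfolding \<phi>_def \<phi>'_def by (auto intro!: derivative_eq_intros)
    have "exp (s / 2) * integral {0..1} (\<lambda>x. exp x * (2 * w x s * wt x s)) \<le> exp (s / 2) * (- V s / 2)"
      by (rule mult_left_mono[OF V_derivative_le]) (use s in auto)
    then show "\<phi>' s \<le> 0" by (simp add: \<phi>'_def)
  qed
  then have "exp (- t / 2) * (exp (t / 2) * V t) \<le> exp (- t / 2) * V 0"
    by (simp add: \<phi>_def)
  then show ?thesis by (simp add: mult.assoc[symmetric] mult_exp_exp)
qed

lemma L2norm_decay:
  assumes t: "t \<ge> 0"
  shows "L2norm (\<lambda>x. u x t)
    \<le> sqrt (2 * exp (2 * K^2) * exp 1 * (2 + 2 * K^2)) * exp (- (1 / 2) * t / 2) * L2norm (\<lambda>x. u x 0)"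
proof -
  define C where "C = 2 * exp (2 * K^2)"
  have "integral {0..1} (\<lambda>x. (u x t)^2) \<le> C * integral {0..1} (\<lambda>x. (w x t)^2)"
    unfolding C_def by (rule integral_square_u_le[OF t])
  also have "\<dots> \<le> C * (exp (- t / 2) * V 0)"
    using integral_square_le_lyapunov[OF continuous_on_w_slice[OF t]] V_decay[OF t]
    by (intro mult_left_mono) (auto simp: C_def V_def)
  also have "\<dots> \<le> C * (exp (- t / 2) * (exp 1 * ((2 + 2 * K^2) * integral {0..1} (\<lambda>x. (u x 0)^2))))"
  proof -
    have "V 0 \<le> exp 1 * integral {0..1} (\<lambda>x. (w x 0)^2)"
      unfolding V_def by (rule lyapunov_le[OF continuous_on_w_slice]) simp
    also have "\<dots> \<le> exp 1 * ((2 + 2 * K^2) * integral {0..1} (\<lambda>x. (u x 0)^2))"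
      using integral_square_w_le[of 0] by simp
    finally show ?thesis by (intro mult_left_mono) (auto simp: C_def)
  qed
  finally have "integral {0..1} (\<lambda>x. (u x t)^2)
      \<le> (C * exp 1 * (2 + 2 * K^2)) * (exp (- (1 / 2) * t / 2))^2 * integral {0..1} (\<lambda>x. (u x 0)^2)"
    by (simp add: power2_eq_square mult_exp_exp mult_ac)
  then have "L2norm (\<lambda>x. u x t)
      \<le> sqrt ((C * exp 1 * (2 + 2 * K^2)) * (exp (- (1 / 2) * t / 2))^2 * integral {0..1} (\<lambda>x. (u x 0)^2))"
    unfolding L2norm_def by (rule real_sqrt_le_mono)
  then show ?thesis
    by (simp add: L2norm_def C_def real_sqrt_mult)
qed

end

lemma closed_loop_solution_L2norm_decay:
  assumes sol: "closed_loop_solution g f khat u"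
    and KE: "kernel_equation g f k" and Ck: "C1_on_Tri k kx ky" and Cf: "C1_on_Tri f fx fy"
    and cg: "continuous_on {0..1} g" and ckh: "continuous_on Tri khat"
    and close: "\<And>y. y \<in> {0..1} \<Longrightarrow> \<bar>khat (1, y) - k (1, y)\<bar> \<le> \<epsilon>"
    and kb: "\<And>p. p \<in> Tri \<Longrightarrow> \<bar>k p\<bar> \<le> K"
    and small: "exp 1 * \<epsilon>^2 * (2 * exp (2 * K^2)) \<le> 1 / 2"
    and t: "t \<ge> 0"
  shows "L2norm (\<lambda>x. u x t)
    \<le> sqrt (2 * exp (2 * K^2) * exp 1 * (2 + 2 * K^2)) * exp (- (1 / 2) * t / 2) * L2norm (\<lambda>x. u x 0)"
proof -
  obtain ux ut where "closed_loop u ux ut g f fx fy k kx ky khat \<epsilon> K"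
    using sol KE Ck Cf cg ckh close kb small
    unfolding closed_loop_solution_def closed_loop_def closed_loop_axioms_def backstepping_plant_def
      backstepping_plant_axioms_def classical_solution_def
    by blast
  then show ?thesis using closed_loop.L2norm_decay[OF _ t] by blast
qed

lemma small_gain_condition:
  fixes K e :: real
  assumes "0 \<le> e" and "e < exp (- (1 + 2 * K^2)) / 2"
  shows "exp 1 * e^2 * (2 * exp (2 * K^2)) \<le> 1 / 2"
proof -
  have "e^2 \<le> (exp (- (1 + 2 * K^2)) / 2)^2"
    using assms by (intro power_mono) auto
  also have "\<dots> = exp (- 2 - 4 * K^2) / 4"
    by (simp add: power2_eq_square mult_exp_exp algebra_simps)
  finally have "exp 1 * e^2 * (2 * exp (2 * K^2)) \<le> exp 1 * (exp (- 2 - 4 * K^2) / 4) * (2 * exp (2 * K^2))"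
    by (intro mult_right_mono mult_left_mono) auto
  also have "\<dots> = (exp 1 * exp (- 2 - 4 * K^2) * exp (2 * K^2)) / 2"
    by (simp add: field_simps)
  also have "exp 1 * exp (- 2 - 4 * K^2) * exp (2 * K^2) = exp (1 + (- 2 - 4 * K^2) + 2 * K^2)"
    by (simp only: exp_add)
  also have "\<dots> \<le> exp 0"
    by (intro exp_mono) (use zero_le_power2[of K] in linarith)
  finally show ?thesis by simp
qed

lemma approximate_kernel_closed_loop_decay:
  assumes AG: "admissible_g Bg Bg' g g'" and AF: "admissible_f Bf Bfx f fx fy"
    and KE: "kernel_equation g f k" and Ck: "C1_on_Tri k kx ky" and Ckh: "C1_on_Tri khat khx khy"
    and \<epsilon>: "0 < \<epsilon>" "\<epsilon> < exp (- (1 + 2 * (kernel_bound_const Bg Bf)^2)) / 2"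
    and close: "\<forall>p\<in>Tri. \<bar>k p - khat p\<bar> + \<bar>kx p - khx p\<bar> + \<bar>ky p - khy p\<bar> < \<epsilon>"
  shows "\<exists>M c. M > 0 \<and> c > 0 \<and> (\<forall>u. closed_loop_solution g f khat u \<longrightarrow>
           (\<forall>t\<ge>0. L2norm (\<lambda>x. u x t) \<le> M * exp (- c * t / 2) * L2norm (\<lambda>x. u x 0)))"
proof -
  define K where "K = kernel_bound_const Bg Bf"
  define M where "M = sqrt (2 * exp (2 * K^2) * exp 1 * (2 + 2 * K^2))"
  have M: "M > 0" by (simp add: M_def add_pos_nonneg)
  have cg: "continuous_on {0..1} g"
    using AG unfolding admissible_g_def by (meson DERIV_continuous continuous_on_eq_continuous_within)
  have kb: "\<And>p. p \<in> Tri \<Longrightarrow> \<bar>k p\<bar> \<le> K"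
    using AG AF KE Ck kernel_bound[of g Bg f Bf k]
    unfolding K_def admissible_g_def admissible_f_def by (blast dest: C1_on_Tri_imp_continuous_on)
  have khat_close: "\<And>y. y \<in> {0..1} \<Longrightarrow> \<bar>khat (1, y) - k (1, y)\<bar> \<le> \<epsilon>"
    using close by (fastforce dest: bspec[of _ _ "(1, _)"])
  have decay: "L2norm (\<lambda>x. u x t) \<le> M * exp (- (1 / 2) * t / 2) * L2norm (\<lambda>x. u x 0)"
    if "closed_loop_solution g f khat u" and "t \<ge> 0" for u t
    using closed_loop_solution_L2norm_decay[OF that(1) KE Ck _ cg C1_on_Tri_imp_continuous_on[OF Ckh]
        khat_close kb small_gain_condition[of \<epsilon> K] that(2)] AF \<epsilon>
    unfolding M_def K_def admissible_f_def by auto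
  show ?thesis
    by (rule exI[of _ M], rule exI[of _ "1 / 2"]) (use M decay in auto)
qed

theorem theorem4:
  fixes Bg Bg' Bf Bfx :: real
  assumes "Bg > 0" and "Bg' > 0" and "Bf > 0" and "Bfx > 0"
  shows "\<exists>eps_star > 0. \<forall>g g' f fx fy k kx ky khat khx khy \<epsilon>.
     admissible_g Bg Bg' g g' \<and> admissible_f Bf Bfx f fx fy \<and>
     kernel_equation g f k \<and> continuous_on Tri k \<and> C1_on_Tri k kx ky \<and>
     C1_on_Tri khat khx khy \<and>
     0 < \<epsilon> \<and> \<epsilon> < eps_star \<and>
     (\<forall>p\<in>Tri. \<bar>k p - khat p\<bar> + \<bar>kx p - khx p\<bar> + \<bar>ky p - khy p\<bar> < \<epsilon>)
     \<longrightarrow> (\<exists>M c. M > 0 \<and> c > 0 \<and>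
            (\<forall>u. closed_loop_solution g f khat u \<longrightarrow>
               (\<forall>t\<ge>0. L2norm (\<lambda>x. u x t) \<le> M * exp (- c * t / 2) * L2norm (\<lambda>x. u x 0))))"
proof (rule exI[of _ "exp (- (1 + 2 * (kernel_bound_const Bg Bf)^2)) / 2"], intro conjI allI impI)
  show "exp (- (1 + 2 * (kernel_bound_const Bg Bf)^2)) / 2 > 0" by simp
qed (use approximate_kernel_closed_loop_decay in blast)

end
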